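(* Let $\mathcal G$ be a groupoid and let $\{\mathcal{G}_i\}_{i\in I}$ be its homogeneous components. Then there is an isomorphism of 2-groups $\mathbb{S}ym(\mathcal{G})\cong\prod_{i\in I}\mathbb{S}ym(\mathcal{G}_i)$, given by sending a self-equivalence (resp. natural isomorphism) to the family of its restrictions to the homogeneous components.
   Context: A homogeneous component of a groupoid $\mathcal G$ is the full subgroupoid formed by the union of all connected components of $\mathcal G$ whose objects have automorphism group isomorphic to a given group; $\mathcal G$ is the disjoint union of its homogeneous components. A 2-group is a monoidal groupoid in which every object has a weak tensor inverse; an isomorphism of 2-groups is a monoidal functor with a strict inverse monoidal functor. For a groupoid $\mathcal K$, $\mathbb{S}ym(\mathcal{K})$ is the 2-group whose objects are self-equivalences of $\mathcal K$ and whose morphisms are natural isomorphisms between them, with tensor product given by composition and horizontal composition. The product of 2-groups is the product groupoid with componentwise monoidal structure. *)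

theory Defs
  imports "HOL-Algebra.Group"
begin

text \<open>gComp G g f is the composite "g after f" (defined when gCod G f = gDom G g).\<close>

record ('o, 'm) gpd =
  gObj  :: "'o set"
  gArr  :: "'m set"
  gDom  :: "'m \<Rightarrow> 'o"
  gCod  :: "'m \<Rightarrow> 'o"
  gComp :: "'m \<Rightarrow> 'm \<Rightarrow> 'm"
  gId   :: "'o \<Rightarrow> 'm"

definition hom :: "('o, 'm, 'x) gpd_scheme \<Rightarrow> 'o \<Rightarrow> 'o \<Rightarrow> 'm set" where
  "hom G a b = {f \<in> gArr G. gDom G f = a \<and> gCod G f = b}"

definition groupoid :: "('o, 'm, 'x) gpd_scheme \<Rightarrow> bool" where
  "groupoid G \<longleftrightarrow>
     (\<forall>f\<in>gArr G. gDom G f \<in> gObj G \<and> gCod G f \<in> gObj G) \<and>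
     (\<forall>a\<in>gObj G. gId G a \<in> hom G a a) \<and>
     (\<forall>f\<in>gArr G. \<forall>g\<in>gArr G. gCod G f = gDom G g \<longrightarrow>
         gComp G g f \<in> hom G (gDom G f) (gCod G g)) \<and>
     (\<forall>f\<in>gArr G. \<forall>g\<in>gArr G. \<forall>h\<in>gArr G. gCod G f = gDom G g \<longrightarrow> gCod G g = gDom G h \<longrightarrow>
         gComp G h (gComp G g f) = gComp G (gComp G h g) f) \<and>
     (\<forall>f\<in>gArr G. gComp G f (gId G (gDom G f)) = f \<and> gComp G (gId G (gCod G f)) f = f) \<and>
     (\<forall>f\<in>gArr G. \<exists>g\<in>hom G (gCod G f) (gDom G f).
         gComp G g f = gId G (gDom G f) \<and> gComp G f g = gId G (gCod G f))"

text \<open>Functors are pairs (object map, arrow map), extensional outside the source groupoid.\<close>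

definition gfunctor ::
  "('a, 'b, 'x) gpd_scheme \<Rightarrow> ('c, 'd, 'y) gpd_scheme \<Rightarrow> ('a \<Rightarrow> 'c) \<times> ('b \<Rightarrow> 'd) \<Rightarrow> bool" where
  "gfunctor G H F \<longleftrightarrow>
     fst F \<in> extensional (gObj G) \<and> snd F \<in> extensional (gArr G) \<and>
     (\<forall>a\<in>gObj G. fst F a \<in> gObj H) \<and>
     (\<forall>f\<in>gArr G. snd F f \<in> hom H (fst F (gDom G f)) (fst F (gCod G f))) \<and>
     (\<forall>f\<in>gArr G. \<forall>g\<in>gArr G. gCod G f = gDom G g \<longrightarrow>
         snd F (gComp G g f) = gComp H (snd F g) (snd F f)) \<and>
     (\<forall>a\<in>gObj G. snd F (gId G a) = gId H (fst F a))"

definition nat_trans ::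
  "('a, 'b, 'x) gpd_scheme \<Rightarrow> ('c, 'd, 'y) gpd_scheme \<Rightarrow>
   ('a \<Rightarrow> 'c) \<times> ('b \<Rightarrow> 'd) \<Rightarrow> ('a \<Rightarrow> 'c) \<times> ('b \<Rightarrow> 'd) \<Rightarrow> ('a \<Rightarrow> 'd) \<Rightarrow> bool" where
  "nat_trans G H F F' \<eta> \<longleftrightarrow>
     \<eta> \<in> extensional (gObj G) \<and>
     (\<forall>a\<in>gObj G. \<eta> a \<in> hom H (fst F a) (fst F' a)) \<and>
     (\<forall>f\<in>gArr G. gComp H (\<eta> (gCod G f)) (snd F f) = gComp H (snd F' f) (\<eta> (gDom G f)))"

definition id_functor :: "('a, 'b, 'x) gpd_scheme \<Rightarrow> ('a \<Rightarrow> 'a) \<times> ('b \<Rightarrow> 'b)" where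
  "id_functor G = ((\<lambda>a\<in>gObj G. a), (\<lambda>f\<in>gArr G. f))"

definition comp_functor ::
  "('a, 'b, 'x) gpd_scheme \<Rightarrow> ('a \<Rightarrow> 'a) \<times> ('b \<Rightarrow> 'b) \<Rightarrow> ('a \<Rightarrow> 'a) \<times> ('b \<Rightarrow> 'b)
     \<Rightarrow> ('a \<Rightarrow> 'a) \<times> ('b \<Rightarrow> 'b)" where
  "comp_functor G F K = ((\<lambda>a\<in>gObj G. fst F (fst K a)), (\<lambda>f\<in>gArr G. snd F (snd K f)))"

text \<open>Self-equivalence: an endofunctor with a quasi-inverse (natural transformations between
  functors into a groupoid are automatically natural isomorphisms).\<close>
definition self_equiv :: "('a, 'b, 'x) gpd_scheme \<Rightarrow> ('a \<Rightarrow> 'a) \<times> ('b \<Rightarrow> 'b) \<Rightarrow> bool" where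
  "self_equiv G F \<longleftrightarrow> gfunctor G G F \<and>
     (\<exists>K. gfunctor G G K \<and>
        (\<exists>\<eta>. nat_trans G G (comp_functor G K F) (id_functor G) \<eta>) \<and>
        (\<exists>\<theta>. nat_trans G G (comp_functor G F K) (id_functor G) \<theta>))"

record ('a, 'b) mgpd = "('a, 'b) gpd" +
  tens_o  :: "'a \<Rightarrow> 'a \<Rightarrow> 'a"
  tens_m  :: "'b \<Rightarrow> 'b \<Rightarrow> 'b"
  unit_o  :: "'a"
  assoc_m :: "'a \<Rightarrow> 'a \<Rightarrow> 'a \<Rightarrow> 'b"
  lunit_m :: "'a \<Rightarrow> 'b"
  runit_m :: "'a \<Rightarrow> 'b"

definition monoidal_groupoid :: "('a, 'b) mgpd \<Rightarrow> bool" where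
  "monoidal_groupoid M \<longleftrightarrow>
   (let Ob = gObj M; A = gArr M; dom = gDom M; cod = gCod M; c = gComp M; i = gId M;
        t = tens_o M; tm = tens_m M; u = unit_o M; as = assoc_m M; lu = lunit_m M; ru = runit_m M
    in groupoid M \<and>
     (\<forall>a\<in>Ob. \<forall>b\<in>Ob. t a b \<in> Ob) \<and>
     (\<forall>f\<in>A. \<forall>g\<in>A. tm f g \<in> hom M (t (dom f) (dom g)) (t (cod f) (cod g))) \<and>
     (\<forall>f\<in>A. \<forall>f'\<in>A. \<forall>g\<in>A. \<forall>g'\<in>A. cod f = dom f' \<longrightarrow> cod g = dom g' \<longrightarrow>
         tm (c f' f) (c g' g) = c (tm f' g') (tm f g)) \<and>
     (\<forall>a\<in>Ob. \<forall>b\<in>Ob. tm (i a) (i b) = i (t a b)) \<and>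
     u \<in> Ob \<and>
     (\<forall>a\<in>Ob. \<forall>b\<in>Ob. \<forall>d\<in>Ob. as a b d \<in> hom M (t (t a b) d) (t a (t b d))) \<and>
     (\<forall>a\<in>Ob. lu a \<in> hom M (t u a) a \<and> ru a \<in> hom M (t a u) a) \<and>
     (\<forall>f\<in>A. \<forall>g\<in>A. \<forall>h\<in>A.
         c (as (cod f) (cod g) (cod h)) (tm (tm f g) h) = c (tm f (tm g h)) (as (dom f) (dom g) (dom h))) \<and>
     (\<forall>f\<in>A. c (lu (cod f)) (tm (i u) f) = c f (lu (dom f))) \<and>
     (\<forall>f\<in>A. c (ru (cod f)) (tm f (i u)) = c f (ru (dom f))) \<and>
     (\<forall>a\<in>Ob. \<forall>b\<in>Ob. \<forall>d\<in>Ob. \<forall>e\<in>Ob.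
         c (tm (i a) (as b d e)) (c (as a (t b d) e) (tm (as a b d) (i e)))
           = c (as a b (t d e)) (as (t a b) d e)) \<and>
     (\<forall>a\<in>Ob. \<forall>b\<in>Ob. c (tm (i a) (lu b)) (as a u b) = tm (ru a) (i b)))"

definition two_group :: "('a, 'b) mgpd \<Rightarrow> bool" where
  "two_group M \<longleftrightarrow> monoidal_groupoid M \<and>
     (\<forall>a\<in>gObj M. \<exists>b\<in>gObj M. hom M (tens_o M a b) (unit_o M) \<noteq> {} \<and>
                                  hom M (tens_o M b a) (unit_o M) \<noteq> {})"

definition monoidal_functor ::
  "('a, 'b) mgpd \<Rightarrow> ('c, 'd) mgpd \<Rightarrow> ('a \<Rightarrow> 'c) \<times> ('b \<Rightarrow> 'd) \<Rightarrow> ('a \<Rightarrow> 'a \<Rightarrow> 'd) \<Rightarrow> 'd \<Rightarrow> bool" where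
  "monoidal_functor M N F F2 F0 \<longleftrightarrow>
   (let Fo = fst F; Fm = snd F; c = gComp N; i = gId N; t = tens_o N; tm = tens_m N
    in gfunctor M N F \<and>
     (\<forall>a\<in>gObj M. \<forall>b\<in>gObj M. F2 a b \<in> hom N (t (Fo a) (Fo b)) (Fo (tens_o M a b))) \<and>
     F0 \<in> hom N (unit_o N) (Fo (unit_o M)) \<and>
     (\<forall>f\<in>gArr M. \<forall>g\<in>gArr M.
        c (F2 (gCod M f) (gCod M g)) (tm (Fm f) (Fm g))
          = c (Fm (tens_m M f g)) (F2 (gDom M f) (gDom M g))) \<and>
     (\<forall>a\<in>gObj M. \<forall>b\<in>gObj M. \<forall>e\<in>gObj M.
        c (Fm (assoc_m M a b e)) (c (F2 (tens_o M a b) e) (tm (F2 a b) (i (Fo e))))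
          = c (F2 a (tens_o M b e)) (c (tm (i (Fo a)) (F2 b e)) (assoc_m N (Fo a) (Fo b) (Fo e)))) \<and>
     (\<forall>a\<in>gObj M.
        c (Fm (lunit_m M a)) (c (F2 (unit_o M) a) (tm F0 (i (Fo a)))) = lunit_m N (Fo a)) \<and>
     (\<forall>a\<in>gObj M.
        c (Fm (runit_m M a)) (c (F2 a (unit_o M)) (tm (i (Fo a)) F0)) = runit_m N (Fo a)))"

definition two_group_iso ::
  "('a, 'b) mgpd \<Rightarrow> ('c, 'd) mgpd \<Rightarrow> ('a \<Rightarrow> 'c) \<times> ('b \<Rightarrow> 'd) \<Rightarrow> ('a \<Rightarrow> 'a \<Rightarrow> 'd) \<Rightarrow> 'd \<Rightarrow> bool" where
  "two_group_iso M N F F2 F0 \<longleftrightarrow> two_group M \<and> two_group N \<and> monoidal_functor M N F F2 F0 \<and>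
     (\<exists>K K2 K0. monoidal_functor N M K K2 K0 \<and>
        (\<forall>a\<in>gObj M. fst K (fst F a) = a) \<and> (\<forall>f\<in>gArr M. snd K (snd F f) = f) \<and>
        (\<forall>b\<in>gObj N. fst F (fst K b) = b) \<and> (\<forall>g\<in>gArr N. snd F (snd K g) = g))"

definition prod_mgpd :: "'i set \<Rightarrow> ('i \<Rightarrow> ('a, 'b) mgpd) \<Rightarrow> ('i \<Rightarrow> 'a, 'i \<Rightarrow> 'b) mgpd" where
  "prod_mgpd I M =
    \<lparr> gObj = (\<Pi>\<^sub>E i\<in>I. gObj (M i)),
      gArr = (\<Pi>\<^sub>E i\<in>I. gArr (M i)),
      gDom = (\<lambda>f. \<lambda>i\<in>I. gDom (M i) (f i)),
      gCod = (\<lambda>f. \<lambda>i\<in>I. gCod (M i) (f i)),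
      gComp = (\<lambda>g f. \<lambda>i\<in>I. gComp (M i) (g i) (f i)),
      gId = (\<lambda>a. \<lambda>i\<in>I. gId (M i) (a i)),
      tens_o = (\<lambda>a b. \<lambda>i\<in>I. tens_o (M i) (a i) (b i)),
      tens_m = (\<lambda>f g. \<lambda>i\<in>I. tens_m (M i) (f i) (g i)),
      unit_o = (\<lambda>i\<in>I. unit_o (M i)),
      assoc_m = (\<lambda>a b d. \<lambda>i\<in>I. assoc_m (M i) (a i) (b i) (d i)),
      lunit_m = (\<lambda>a. \<lambda>i\<in>I. lunit_m (M i) (a i)),
      runit_m = (\<lambda>a. \<lambda>i\<in>I. runit_m (M i) (a i)) \<rparr>"

type_synonym ('o, 'm) sobj = "('o \<Rightarrow> 'o) \<times> ('m \<Rightarrow> 'm)"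
type_synonym ('o, 'm) smor = "(('o, 'm) sobj \<times> ('o, 'm) sobj) \<times> ('o \<Rightarrow> 'm)"

text \<open>Objects: self-equivalences. Arrows ((F,F'),eta): natural isomorphisms F => F'.
  Tensor: composition F (x) K = F o K, horizontal composition on arrows.\<close>
definition Sym :: "('o, 'm) gpd \<Rightarrow> (('o, 'm) sobj, ('o, 'm) smor) mgpd" where
  "Sym G =
    \<lparr> gObj = {F. self_equiv G F},
      gArr = {((F, F'), \<eta>). self_equiv G F \<and> self_equiv G F' \<and> nat_trans G G F F' \<eta>},
      gDom = (\<lambda>u. fst (fst u)),
      gCod = (\<lambda>u. snd (fst u)),
      gComp = (\<lambda>v u. ((fst (fst u), snd (fst v)), (\<lambda>a\<in>gObj G. gComp G (snd v a) (snd u a)))),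
      gId = (\<lambda>F. ((F, F), (\<lambda>a\<in>gObj G. gId G (fst F a)))),
      tens_o = (\<lambda>F K. comp_functor G F K),
      tens_m = (\<lambda>u v. ((comp_functor G (fst (fst u)) (fst (fst v)),
                         comp_functor G (snd (fst u)) (snd (fst v))),
                        (\<lambda>a\<in>gObj G. gComp G (snd u (fst (snd (fst v)) a))
                                             (snd (fst (fst u)) (snd v a))))),
      unit_o = id_functor G,
      assoc_m = (\<lambda>F K L. ((comp_functor G (comp_functor G F K) L, comp_functor G F (comp_functor G K L)),
                           (\<lambda>a\<in>gObj G. gId G (fst F (fst K (fst L a)))))),
      lunit_m = (\<lambda>F. ((comp_functor G (id_functor G) F, F), (\<lambda>a\<in>gObj G. gId G (fst F a)))),
      runit_m = (\<lambda>F. ((comp_functor G F (id_functor G), F), (\<lambda>a\<in>gObj G. gId G (fst F a)))) \<rparr>"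

definition full_sub :: "('o, 'm) gpd \<Rightarrow> 'o set \<Rightarrow> ('o, 'm) gpd" where
  "full_sub G S = G\<lparr> gObj := S, gArr := {f \<in> gArr G. gDom G f \<in> S \<and> gCod G f \<in> S} \<rparr>"

definition aut :: "('o, 'm) gpd \<Rightarrow> 'o \<Rightarrow> 'm monoid" where
  "aut G x = \<lparr> carrier = hom G x x, mult = (\<lambda>f g. gComp G f g), one = gId G x \<rparr>"

definition conn_component :: "('o, 'm) gpd \<Rightarrow> 'o \<Rightarrow> 'o set" where
  "conn_component G x = {y \<in> gObj G. hom G x y \<noteq> {}}"

definition homog_components :: "('o, 'm) gpd \<Rightarrow> 'o set set" where
  "homog_components G =
     {\<Union>{conn_component G y | y. y \<in> gObj G \<and> aut G y \<cong> aut G x} | x. x \<in> gObj G}"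

definition restr_o :: "('o, 'm) gpd \<Rightarrow> ('o, 'm) sobj \<Rightarrow> ('o set \<Rightarrow> ('o, 'm) sobj)" where
  "restr_o G = (\<lambda>F\<in>gObj (Sym G). \<lambda>C\<in>homog_components G.
      (restrict (fst F) C, restrict (snd F) (gArr (full_sub G C))))"

definition restr_m :: "('o, 'm) gpd \<Rightarrow> ('o, 'm) smor \<Rightarrow> ('o set \<Rightarrow> ('o, 'm) smor)" where
  "restr_m G = (\<lambda>u\<in>gArr (Sym G). \<lambda>C\<in>homog_components G.
      (((restrict (fst (fst (fst u))) C, restrict (snd (fst (fst u))) (gArr (full_sub G C))),
        (restrict (fst (snd (fst u))) C, restrict (snd (snd (fst u))) (gArr (full_sub G C)))),
       restrict (snd u) C))"

end

theory Submission
  imports Defs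
begin

text \<open>A self-equivalence \<open>F\<close> of \<open>\<G>\<close> is fully faithful, so it induces an isomorphism
  \<open>Aut(x) \<cong> Aut(F x)\<close>; conjugation by an arrow \<open>x \<rightarrow> y\<close> likewise gives \<open>Aut(x) \<cong> Aut(y)\<close>.
  Hence self-equivalences and arrows never leave a homogeneous component, and restriction
  sends \<open>\<S>ym(\<G>)\<close> into \<open>\<Prod>\<^sub>i \<S>ym(\<G>\<^sub>i)\<close>.  Since the homogeneous components partition the
  objects and no arrow joins two of them, a family of self-equivalences (or natural
  isomorphisms) of the components glues uniquely to one of \<open>\<G>\<close>.  Restriction is strictly
  monoidal and bijective on objects and arrows, so gluing is a strict inverse, which is then
  automatically strictly monoidal as well.\<close>

locale grpd =
  fixes G :: "('o, 'm, 'x) gpd_scheme"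
  assumes groupoid: "groupoid G"
begin

abbreviation "Ob \<equiv> gObj G"
abbreviation "Ar \<equiv> gArr G"
abbreviation "dm \<equiv> gDom G"
abbreviation "cd \<equiv> gCod G"
abbreviation "cmp \<equiv> gComp G"
abbreviation "idt \<equiv> gId G"

lemma hom_iff: "f \<in> hom G a b \<longleftrightarrow> f \<in> Ar \<and> dm f = a \<and> cd f = b"
  unfolding hom_def by blast

lemma dm_ob [simp]: "f \<in> Ar \<Longrightarrow> dm f \<in> Ob"
  and cd_ob [simp]: "f \<in> Ar \<Longrightarrow> cd f \<in> Ob"
  and id_ar [simp]: "a \<in> Ob \<Longrightarrow> idt a \<in> Ar"
  and dm_id [simp]: "a \<in> Ob \<Longrightarrow> dm (idt a) = a"
  and cd_id [simp]: "a \<in> Ob \<Longrightarrow> cd (idt a) = a"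
  using groupoid unfolding groupoid_def hom_def by blast+

lemma cmp_ar [simp]: "f \<in> Ar \<Longrightarrow> g \<in> Ar \<Longrightarrow> cd f = dm g \<Longrightarrow> cmp g f \<in> Ar"
  and dm_cmp [simp]: "f \<in> Ar \<Longrightarrow> g \<in> Ar \<Longrightarrow> cd f = dm g \<Longrightarrow> dm (cmp g f) = dm f"
  and cd_cmp [simp]: "f \<in> Ar \<Longrightarrow> g \<in> Ar \<Longrightarrow> cd f = dm g \<Longrightarrow> cd (cmp g f) = cd g"
  using groupoid unfolding groupoid_def hom_def by blast+

lemma cmp_assoc [simp]:
  "f \<in> Ar \<Longrightarrow> g \<in> Ar \<Longrightarrow> h \<in> Ar \<Longrightarrow> cd f = dm g \<Longrightarrow> cd g = dm h \<Longrightarrow>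
   cmp (cmp h g) f = cmp h (cmp g f)"
  using groupoid unfolding groupoid_def by metis

lemma cmp_id_right [simp]: "f \<in> Ar \<Longrightarrow> dm f = a \<Longrightarrow> cmp f (idt a) = f"
  and cmp_id_left [simp]: "f \<in> Ar \<Longrightarrow> cd f = a \<Longrightarrow> cmp (idt a) f = f"
  using groupoid unfolding groupoid_def by blast+

definition inv_arr :: "'m \<Rightarrow> 'm" where
  "inv_arr f = (SOME g. g \<in> hom G (cd f) (dm f) \<and> cmp g f = idt (dm f) \<and> cmp f g = idt (cd f))"

lemma inv_arr_spec:
  "f \<in> Ar \<Longrightarrow> inv_arr f \<in> hom G (cd f) (dm f) \<and> cmp (inv_arr f) f = idt (dm f) \<and> cmp f (inv_arr f) = idt (cd f)"
  unfolding inv_arr_def by (rule someI_ex) (use groupoid in \<open>unfold groupoid_def, blast\<close>)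

lemma inv_arr_ar [simp]: "f \<in> Ar \<Longrightarrow> inv_arr f \<in> Ar"
  and dm_inv_arr [simp]: "f \<in> Ar \<Longrightarrow> dm (inv_arr f) = cd f"
  and cd_inv_arr [simp]: "f \<in> Ar \<Longrightarrow> cd (inv_arr f) = dm f"
  and inv_arr_cmp [simp]: "f \<in> Ar \<Longrightarrow> cmp (inv_arr f) f = idt (dm f)"
  and cmp_inv_arr [simp]: "f \<in> Ar \<Longrightarrow> cmp f (inv_arr f) = idt (cd f)"
  using inv_arr_spec hom_iff by blast+

lemma inv_arr_cmp_cancel [simp]: "f \<in> Ar \<Longrightarrow> g \<in> Ar \<Longrightarrow> cd g = dm f \<Longrightarrow> cmp (inv_arr f) (cmp f g) = g"
  by (metis cmp_assoc inv_arr_ar cd_inv_arr dm_inv_arr inv_arr_cmp cmp_id_left dm_ob)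

lemma cmp_inv_arr_cancel [simp]: "f \<in> Ar \<Longrightarrow> g \<in> Ar \<Longrightarrow> cd g = cd f \<Longrightarrow> cmp f (cmp (inv_arr f) g) = g"
  by (metis cmp_assoc inv_arr_ar cd_inv_arr dm_inv_arr cmp_inv_arr cmp_id_left cd_ob)

lemma cmp_cancel_right:
  "h \<in> Ar \<Longrightarrow> f \<in> Ar \<Longrightarrow> g \<in> Ar \<Longrightarrow> cd h = dm f \<Longrightarrow> cd h = dm g \<Longrightarrow> cmp f h = cmp g h \<Longrightarrow> f = g"
  by (metis cmp_assoc inv_arr_ar cd_inv_arr dm_inv_arr cmp_inv_arr cmp_id_right cd_ob)

end

lemma full_sub_groupoid:
  assumes "groupoid G" and "C \<subseteq> gObj G"
  shows "groupoid (full_sub G C)"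
proof -
  interpret grpd G by (rule grpd.intro) fact
  show ?thesis
    unfolding groupoid_def hom_def full_sub_def
    using assms(2) apply (auto simp: subset_iff)
    subgoal for f by (rule exI[of _ "inv_arr f"]) auto
    done
qed

context grpd
begin

lemma functor_ob [simp]: "gfunctor G G F \<Longrightarrow> a \<in> Ob \<Longrightarrow> fst F a \<in> Ob"
  and functor_ar [simp]: "gfunctor G G F \<Longrightarrow> f \<in> Ar \<Longrightarrow> snd F f \<in> Ar"
  and dm_functor [simp]: "gfunctor G G F \<Longrightarrow> f \<in> Ar \<Longrightarrow> dm (snd F f) = fst F (dm f)"
  and cd_functor [simp]: "gfunctor G G F \<Longrightarrow> f \<in> Ar \<Longrightarrow> cd (snd F f) = fst F (cd f)"
  and functor_cmp [simp]: "gfunctor G G F \<Longrightarrow> f \<in> Ar \<Longrightarrow> g \<in> Ar \<Longrightarrow> cd f = dm g \<Longrightarrow>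
     snd F (cmp g f) = cmp (snd F g) (snd F f)"
  and functor_id [simp]: "gfunctor G G F \<Longrightarrow> a \<in> Ob \<Longrightarrow> snd F (idt a) = idt (fst F a)"
  and functor_ob_extensional: "gfunctor G G F \<Longrightarrow> fst F \<in> extensional Ob"
  and functor_ar_extensional: "gfunctor G G F \<Longrightarrow> snd F \<in> extensional Ar"
  unfolding gfunctor_def hom_def by blast+

lemma functor_eqI:
  assumes "gfunctor G G F" "gfunctor G G F'"
    and "\<And>a. a \<in> Ob \<Longrightarrow> fst F a = fst F' a" "\<And>f. f \<in> Ar \<Longrightarrow> snd F f = snd F' f"
  shows "F = F'"
  using extensionalityI[OF functor_ob_extensional[OF assms(1)] functor_ob_extensional[OF assms(2)]]
    extensionalityI[OF functor_ar_extensional[OF assms(1)] functor_ar_extensional[OF assms(2)]] assms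
  by (simp add: prod_eq_iff)

lemma comp_functor_fst [simp]: "a \<in> Ob \<Longrightarrow> fst (comp_functor G F K) a = fst F (fst K a)"
  and comp_functor_snd [simp]: "f \<in> Ar \<Longrightarrow> snd (comp_functor G F K) f = snd F (snd K f)"
  and id_functor_fst [simp]: "a \<in> Ob \<Longrightarrow> fst (id_functor G) a = a"
  and id_functor_snd [simp]: "f \<in> Ar \<Longrightarrow> snd (id_functor G) f = f"
  unfolding comp_functor_def id_functor_def by simp_all

lemma gfunctor_id [simp]: "gfunctor G G (id_functor G)"
  unfolding gfunctor_def id_functor_def hom_def by auto

lemma gfunctor_comp [simp]: "gfunctor G G F \<Longrightarrow> gfunctor G G K \<Longrightarrow> gfunctor G G (comp_functor G F K)"
  unfolding gfunctor_def[of G G "comp_functor G F K"] hom_def by (auto simp: comp_functor_def)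

lemma comp_functor_assoc:
  "gfunctor G G F \<Longrightarrow> gfunctor G G K \<Longrightarrow> gfunctor G G L \<Longrightarrow>
   comp_functor G (comp_functor G F K) L = comp_functor G F (comp_functor G K L)"
  by (rule functor_eqI) auto

lemma comp_functor_id_left [simp]: "gfunctor G G F \<Longrightarrow> comp_functor G (id_functor G) F = F"
  and comp_functor_id_right [simp]: "gfunctor G G F \<Longrightarrow> comp_functor G F (id_functor G) = F"
  by (rule functor_eqI; simp)+

lemma nat_trans_ar [simp]: "nat_trans G G A B \<eta> \<Longrightarrow> a \<in> Ob \<Longrightarrow> \<eta> a \<in> Ar"
  and dm_nat_trans [simp]: "nat_trans G G A B \<eta> \<Longrightarrow> a \<in> Ob \<Longrightarrow> dm (\<eta> a) = fst A a"
  and cd_nat_trans [simp]: "nat_trans G G A B \<eta> \<Longrightarrow> a \<in> Ob \<Longrightarrow> cd (\<eta> a) = fst B a"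
  and nat_trans_naturality: "nat_trans G G A B \<eta> \<Longrightarrow> f \<in> Ar \<Longrightarrow>
     cmp (\<eta> (cd f)) (snd A f) = cmp (snd B f) (\<eta> (dm f))"
  and nat_trans_extensional: "nat_trans G G A B \<eta> \<Longrightarrow> \<eta> \<in> extensional Ob"
  unfolding nat_trans_def hom_def by blast+

lemma nat_transI:
  assumes "\<eta> \<in> extensional Ob" "\<And>a. a \<in> Ob \<Longrightarrow> \<eta> a \<in> Ar"
    "\<And>a. a \<in> Ob \<Longrightarrow> dm (\<eta> a) = fst A a" "\<And>a. a \<in> Ob \<Longrightarrow> cd (\<eta> a) = fst B a"
    "\<And>f. f \<in> Ar \<Longrightarrow> cmp (\<eta> (cd f)) (snd A f) = cmp (snd B f) (\<eta> (dm f))"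
  shows "nat_trans G G A B \<eta>"
  using assms unfolding nat_trans_def hom_def by blast

lemma nat_trans_id: "gfunctor G G F \<Longrightarrow> nat_trans G G F F (\<lambda>a\<in>Ob. idt (fst F a))"
  by (rule nat_transI) auto

lemma nat_trans_vcomp:
  assumes A: "gfunctor G G A" and B: "gfunctor G G B" and C: "gfunctor G G C"
    and \<eta>: "nat_trans G G A B \<eta>" and \<theta>: "nat_trans G G B C \<theta>"
  shows "nat_trans G G A C (\<lambda>a\<in>Ob. cmp (\<theta> a) (\<eta> a))"
proof (rule nat_transI)
  fix f assume f: "f \<in> Ar"
  have "cmp (cmp (\<theta> (cd f)) (\<eta> (cd f))) (snd A f) = cmp (\<theta> (cd f)) (cmp (\<eta> (cd f)) (snd A f))"
    using A B \<eta> \<theta> f by simp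
  also have "\<dots> = cmp (\<theta> (cd f)) (cmp (snd B f) (\<eta> (dm f)))"
    using nat_trans_naturality[OF \<eta> f] by simp
  also have "\<dots> = cmp (cmp (\<theta> (cd f)) (snd B f)) (\<eta> (dm f))"
    using A B \<eta> \<theta> f by simp
  also have "\<dots> = cmp (cmp (snd C f) (\<theta> (dm f))) (\<eta> (dm f))"
    using nat_trans_naturality[OF \<theta> f] by simp
  also have "\<dots> = cmp (snd C f) (cmp (\<theta> (dm f)) (\<eta> (dm f)))"
    using B C \<eta> \<theta> f by simp
  finally show "cmp ((\<lambda>a\<in>Ob. cmp (\<theta> a) (\<eta> a)) (cd f)) (snd A f) =
      cmp (snd C f) ((\<lambda>a\<in>Ob. cmp (\<theta> a) (\<eta> a)) (dm f))"
    using f by simp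
qed (use \<eta> \<theta> in auto)

lemma nat_trans_hcomp:
  assumes F: "gfunctor G G F" and F': "gfunctor G G F'" and K: "gfunctor G G K" and K': "gfunctor G G K'"
    and u: "nat_trans G G F F' u" and v: "nat_trans G G K K' v"
  shows "nat_trans G G (comp_functor G F K) (comp_functor G F' K') (\<lambda>a\<in>Ob. cmp (u (fst K' a)) (snd F (v a)))"
proof (rule nat_transI)
  fix f assume f: "f \<in> Ar"
  let ?a = "dm f" and ?b = "cd f"
  have "cmp (cmp (u (fst K' ?b)) (snd F (v ?b))) (snd F (snd K f))
      = cmp (u (fst K' ?b)) (snd F (cmp (v ?b) (snd K f)))"
    using F K K' u v f by simp
  also have "\<dots> = cmp (u (fst K' ?b)) (snd F (cmp (snd K' f) (v ?a)))"
    using nat_trans_naturality[OF v f] by simp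
  also have "\<dots> = cmp (cmp (u (cd (snd K' f))) (snd F (snd K' f))) (snd F (v ?a))"
    using F K K' u v f by simp
  also have "\<dots> = cmp (cmp (snd F' (snd K' f)) (u (dm (snd K' f)))) (snd F (v ?a))"
    using nat_trans_naturality[OF u functor_ar[OF K' f]] by simp
  also have "\<dots> = cmp (snd F' (snd K' f)) (cmp (u (fst K' ?a)) (snd F (v ?a)))"
    using F F' K K' u v f by simp
  finally show "cmp ((\<lambda>a\<in>Ob. cmp (u (fst K' a)) (snd F (v a))) (cd f)) (snd (comp_functor G F K) f) =
      cmp (snd (comp_functor G F' K') f) ((\<lambda>a\<in>Ob. cmp (u (fst K' a)) (snd F (v a))) (dm f))"
    using f by simp
qed (use F F' K K' u v in auto)

lemma nat_trans_inverse:
  assumes A: "gfunctor G G A" and B: "gfunctor G G B" and \<eta>: "nat_trans G G A B \<eta>"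
  shows "nat_trans G G B A (\<lambda>a\<in>Ob. inv_arr (\<eta> a))"
proof (rule nat_transI)
  fix f assume f: "f \<in> Ar"
  let ?x = "\<eta> (dm f)" and ?y = "\<eta> (cd f)"
  have "cmp (snd A f) (inv_arr ?x) = cmp (inv_arr ?y) (cmp (cmp ?y (snd A f)) (inv_arr ?x))"
    using A \<eta> f by simp
  also have "\<dots> = cmp (inv_arr ?y) (cmp (cmp (snd B f) ?x) (inv_arr ?x))"
    using nat_trans_naturality[OF \<eta> f] by simp
  also have "\<dots> = cmp (inv_arr ?y) (snd B f)"
    using B \<eta> f by (subst cmp_assoc) (auto simp del: cmp_assoc)
  finally show "cmp ((\<lambda>a\<in>Ob. inv_arr (\<eta> a)) (cd f)) (snd B f) = cmp (snd A f) ((\<lambda>a\<in>Ob. inv_arr (\<eta> a)) (dm f))"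
    using f by simp
qed (use \<eta> in auto)

end


context grpd
begin

lemma self_equiv_functor [simp]: "self_equiv G F \<Longrightarrow> gfunctor G G F"
  unfolding self_equiv_def by blast

lemma self_equiv_quasi_inverse:
  "self_equiv G F \<Longrightarrow> \<exists>K. self_equiv G K \<and>
     (\<exists>\<eta>. nat_trans G G (comp_functor G K F) (id_functor G) \<eta>) \<and>
     (\<exists>\<theta>. nat_trans G G (comp_functor G F K) (id_functor G) \<theta>)"
  unfolding self_equiv_def by blast

lemma self_equiv_id [simp]: "self_equiv G (id_functor G)"
  unfolding self_equiv_def
  using nat_trans_id[OF gfunctor_id] by (intro conjI exI[of _ "id_functor G"]) auto

text \<open>\<open>(C \<circ> A) \<circ> (B \<circ> D) = C \<circ> (A \<circ> B) \<circ> D \<cong> C \<circ> D \<cong> id\<close>, whiskering the first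
  isomorphism by \<open>C\<close> and \<open>D\<close>.\<close>

lemma nat_trans_to_id_nested:
  assumes A: "gfunctor G G A" and B: "gfunctor G G B" and C: "gfunctor G G C" and D: "gfunctor G G D"
    and \<alpha>: "nat_trans G G (comp_functor G A B) (id_functor G) \<alpha>"
    and \<beta>: "nat_trans G G (comp_functor G C D) (id_functor G) \<beta>"
  shows "\<exists>\<gamma>. nat_trans G G (comp_functor G (comp_functor G C A) (comp_functor G B D)) (id_functor G) \<gamma>"
proof -
  have AB: "gfunctor G G (comp_functor G A B)" using A B by simp
  have ABD: "nat_trans G G (comp_functor G (comp_functor G A B) D) D
      (\<lambda>a\<in>Ob. cmp (\<alpha> (fst D a)) (snd (comp_functor G A B) ((\<lambda>a\<in>Ob. idt (fst D a)) a)))"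
    using nat_trans_hcomp[OF AB gfunctor_id D D \<alpha> nat_trans_id[OF D]] D by simp
  note CABD = nat_trans_hcomp[OF C C gfunctor_comp[OF AB D] D nat_trans_id[OF C] ABD]
  have "comp_functor G C (comp_functor G (comp_functor G A B) D)
      = comp_functor G (comp_functor G C A) (comp_functor G B D)"
    using A B C D by (simp add: comp_functor_assoc)
  then show ?thesis
    using nat_trans_vcomp[OF _ _ gfunctor_id CABD \<beta>] A B C D by auto
qed

lemma self_equiv_comp [simp]:
  assumes F: "self_equiv G F" and K: "self_equiv G K"
  shows "self_equiv G (comp_functor G F K)"
proof -
  obtain F' where F': "self_equiv G F'" "\<exists>\<eta>. nat_trans G G (comp_functor G F' F) (id_functor G) \<eta>"
     "\<exists>\<theta>. nat_trans G G (comp_functor G F F') (id_functor G) \<theta>"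
    using self_equiv_quasi_inverse[OF F] by blast
  obtain K' where K': "self_equiv G K'" "\<exists>\<eta>. nat_trans G G (comp_functor G K' K) (id_functor G) \<eta>"
     "\<exists>\<theta>. nat_trans G G (comp_functor G K K') (id_functor G) \<theta>"
    using self_equiv_quasi_inverse[OF K] by blast
  have f: "gfunctor G G F" "gfunctor G G F'" "gfunctor G G K" "gfunctor G G K'"
    using F F' K K' by auto
  show ?thesis unfolding self_equiv_def
  proof (intro conjI exI[of _ "comp_functor G K' F'"])
    show "\<exists>\<eta>. nat_trans G G (comp_functor G (comp_functor G K' F') (comp_functor G F K)) (id_functor G) \<eta>"
      using F'(2) K'(2) nat_trans_to_id_nested[OF f(2) f(1) f(4) f(3)] by blast
    show "\<exists>\<eta>. nat_trans G G (comp_functor G (comp_functor G F K) (comp_functor G K' F')) (id_functor G) \<eta>"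
      using F'(3) K'(3) nat_trans_to_id_nested[OF f(3) f(4) f(1) f(2)] by blast
  qed (use f in auto)
qed

lemma faithful_if_left_quasi_inverse:
  assumes A: "gfunctor G G A" and B: "gfunctor G G B"
    and \<zeta>: "nat_trans G G (comp_functor G A B) (id_functor G) \<zeta>"
    and f: "f \<in> Ar" and g: "g \<in> Ar" and "dm f = dm g" and "cd f = cd g" and "snd B f = snd B g"
  shows "f = g"
proof -
  have "cmp f (\<zeta> (dm f)) = cmp (\<zeta> (cd f)) (snd A (snd B f))"
    using nat_trans_naturality[OF \<zeta> f] f by simp
  also have "\<dots> = cmp g (\<zeta> (dm f))"
    using nat_trans_naturality[OF \<zeta> g] g assms(6-8) by simp
  finally show ?thesis
    by (rule cmp_cancel_right[rotated 5]) (use f g \<zeta> assms(6) in auto)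
qed

lemma self_equiv_full:
  assumes F: "self_equiv G F" and x: "x \<in> Ob" and y: "y \<in> Ob"
    and g: "g \<in> hom G (fst F x) (fst F y)"
  shows "\<exists>f\<in>hom G x y. snd F f = g"
proof -
  obtain K \<eta> \<theta> where K: "self_equiv G K"
    and \<eta>: "nat_trans G G (comp_functor G K F) (id_functor G) \<eta>"
    and \<theta>: "nat_trans G G (comp_functor G F K) (id_functor G) \<theta>"
    using self_equiv_quasi_inverse[OF F] by blast
  have FK: "gfunctor G G F" "gfunctor G G K" using F K by auto
  have g_ar: "g \<in> Ar" "dm g = fst F x" "cd g = fst F y" using g by (auto simp: hom_iff)
  define f where "f = cmp (\<eta> y) (cmp (snd K g) (inv_arr (\<eta> x)))"
  have f_ar: "f \<in> Ar" "dm f = x" "cd f = y"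
    unfolding f_def using FK g_ar \<eta> x y by auto
  have "snd K (snd F f) = cmp (inv_arr (\<eta> y)) (cmp (\<eta> y) (snd K (snd F f)))"
    using f_ar FK \<eta> y by simp
  also have "\<dots> = cmp (inv_arr (\<eta> y)) (cmp f (\<eta> x))"
    using nat_trans_naturality[OF \<eta> f_ar(1)] f_ar by simp
  also have "\<dots> = snd K g"
    unfolding f_def using FK g_ar \<eta> x y by simp
  finally have "snd F f = g"
    by (rule faithful_if_left_quasi_inverse[OF FK(1,2) \<theta>, rotated 4]) (use FK f_ar g_ar in auto)
  then show ?thesis using f_ar by (auto simp: hom_iff)
qed

end

section \<open>The 2-group of self-equivalences\<close>

lemma Sym_obj [simp]: "F \<in> gObj (Sym G) \<longleftrightarrow> self_equiv G F"
  and Sym_arr: "u \<in> gArr (Sym G) \<longleftrightarrow> self_equiv G (fst (fst u)) \<and> self_equiv G (snd (fst u)) \<and>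
     nat_trans G G (fst (fst u)) (snd (fst u)) (snd u)"
  and Sym_dom [simp]: "gDom (Sym G) u = fst (fst u)"
  and Sym_cod [simp]: "gCod (Sym G) u = snd (fst u)"
  and Sym_comp [simp]: "gComp (Sym G) v u =
     ((fst (fst u), snd (fst v)), (\<lambda>a\<in>gObj G. gComp G (snd v a) (snd u a)))"
  and Sym_id [simp]: "gId (Sym G) F = ((F, F), (\<lambda>a\<in>gObj G. gId G (fst F a)))"
  and Sym_tens_o [simp]: "tens_o (Sym G) F K = comp_functor G F K"
  and Sym_tens_m [simp]: "tens_m (Sym G) u v =
     ((comp_functor G (fst (fst u)) (fst (fst v)), comp_functor G (snd (fst u)) (snd (fst v))),
      (\<lambda>a\<in>gObj G. gComp G (snd u (fst (snd (fst v)) a)) (snd (fst (fst u)) (snd v a))))"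
  and Sym_unit [simp]: "unit_o (Sym G) = id_functor G"
  and Sym_assoc [simp]: "assoc_m (Sym G) F K L =
     ((comp_functor G (comp_functor G F K) L, comp_functor G F (comp_functor G K L)),
      (\<lambda>a\<in>gObj G. gId G (fst F (fst K (fst L a)))))"
  and Sym_lunit [simp]: "lunit_m (Sym G) F = ((comp_functor G (id_functor G) F, F), (\<lambda>a\<in>gObj G. gId G (fst F a)))"
  and Sym_runit [simp]: "runit_m (Sym G) F = ((comp_functor G F (id_functor G), F), (\<lambda>a\<in>gObj G. gId G (fst F a)))"
  by (auto simp: Sym_def split: prod.splits)

locale plain_grpd = grpd G for G :: "('o, 'm) gpd"
begin

abbreviation "S \<equiv> Sym G"

lemma Sym_arrE: assumes "u \<in> gArr S"
  obtains F F' \<eta> where "u = ((F, F'), \<eta>)" "self_equiv G F" "self_equiv G F'" "nat_trans G G F F' \<eta>"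
  using assms by (cases u) (auto simp: Sym_arr)

lemma Sym_hom: "u \<in> hom S F F' \<longleftrightarrow> (\<exists>\<eta>. u = ((F, F'), \<eta>) \<and> self_equiv G F \<and> self_equiv G F' \<and> nat_trans G G F F' \<eta>)"
  unfolding hom_def by (cases u) (auto simp: Sym_arr)

lemma Sym_groupoid: "groupoid S"
  unfolding groupoid_def
proof (intro conjI ballI impI)
  fix f assume "f \<in> gArr S" thus "gDom S f \<in> gObj S" "gCod S f \<in> gObj S" by (auto simp: Sym_arr)
next
  fix a assume "a \<in> gObj S" thus "gId S a \<in> hom S a a" using nat_trans_id by (auto simp: Sym_hom)
next
  fix f g assume f: "f \<in> gArr S" and g: "g \<in> gArr S" and e: "gCod S f = gDom S g"
  from f obtain F F' \<eta> where fe: "f = ((F, F'), \<eta>)"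
    "self_equiv G F" "self_equiv G F'" "nat_trans G G F F' \<eta>"
    by (rule Sym_arrE)
  from g obtain K K' \<theta> where ge: "g = ((K, K'), \<theta>)"
    "self_equiv G K" "self_equiv G K'" "nat_trans G G K K' \<theta>"
    by (rule Sym_arrE)
  have "K = F'" using e fe ge by simp
  thus "gComp S g f \<in> hom S (gDom S f) (gCod S g)"
    using fe ge nat_trans_vcomp[of F F' K' \<eta> \<theta>] by (auto simp: Sym_hom)
next
  fix f g h assume f: "f \<in> gArr S" and g: "g \<in> gArr S" and h: "h \<in> gArr S"
    and e1: "gCod S f = gDom S g" and e2: "gCod S g = gDom S h"
  from f obtain F F' \<eta> where fe: "f = ((F, F'), \<eta>)"
    "self_equiv G F" "self_equiv G F'" "nat_trans G G F F' \<eta>"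
    by (rule Sym_arrE)
  from g obtain K K' \<theta> where ge: "g = ((K, K'), \<theta>)"
    "self_equiv G K" "self_equiv G K'" "nat_trans G G K K' \<theta>"
    by (rule Sym_arrE)
  from h obtain L L' \<kappa> where he: "h = ((L, L'), \<kappa>)"
    "self_equiv G L" "self_equiv G L'" "nat_trans G G L L' \<kappa>"
    by (rule Sym_arrE)
  have "K = F'" "L = K'" using e1 e2 fe ge he by auto
  then show "gComp S h (gComp S g f) = gComp S (gComp S h g) f"
    using fe ge he by (auto intro!: restrict_ext)
next
  fix f assume f: "f \<in> gArr S"
  from f obtain F F' \<eta> where fe: "f = ((F, F'), \<eta>)"
    "self_equiv G F" "self_equiv G F'" "nat_trans G G F F' \<eta>"
    by (rule Sym_arrE)
  have x: "\<eta> \<in> extensional Ob" using nat_trans_extensional fe by blast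
  show "gComp S f (gId S (gDom S f)) = f" "gComp S (gId S (gCod S f)) f = f"
    using fe x by (auto intro!: extensionalityI[of _ Ob])
  let ?g = "((F', F), (\<lambda>a\<in>Ob. inv_arr (\<eta> a)))"
  show "\<exists>g\<in>hom S (gCod S f) (gDom S f). gComp S g f = gId S (gDom S f) \<and> gComp S f g = gId S (gCod S f)"
  proof (intro bexI[of _ ?g] conjI)
    show "?g \<in> hom S (gCod S f) (gDom S f)" using fe nat_trans_inverse[of F F' \<eta>] by (auto simp: Sym_hom)
  qed (use fe in \<open>auto intro!: restrict_ext\<close>)
qed

lemma Sym_interchange:
  assumes f: "f \<in> gArr S" and f': "f' \<in> gArr S" and g: "g \<in> gArr S" and g': "g' \<in> gArr S"
    and e1: "gCod S f = gDom S f'" and e2: "gCod S g = gDom S g'"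
  shows "tens_m S (gComp S f' f) (gComp S g' g) = gComp S (tens_m S f' g') (tens_m S f g)"
proof -
  from f obtain F F' \<eta> where fe: "f = ((F, F'), \<eta>)"
    "self_equiv G F" "self_equiv G F'" "nat_trans G G F F' \<eta>"
    by (rule Sym_arrE)
  from f' obtain F1 F'' \<eta>' where fe': "f' = ((F1, F''), \<eta>')"
    "self_equiv G F1" "self_equiv G F''" "nat_trans G G F1 F'' \<eta>'"
    by (rule Sym_arrE)
  from g obtain K K' \<theta> where ge: "g = ((K, K'), \<theta>)"
    "self_equiv G K" "self_equiv G K'" "nat_trans G G K K' \<theta>"
    by (rule Sym_arrE)
  from g' obtain K1 K'' \<theta>' where ge': "g' = ((K1, K''), \<theta>')"
    "self_equiv G K1" "self_equiv G K''" "nat_trans G G K1 K'' \<theta>'"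
    by (rule Sym_arrE)
  have [simp]: "F1 = F'" "K1 = K'" using e1 e2 fe fe' ge ge' by auto
  have fu: "gfunctor G G F" "gfunctor G G F'" "gfunctor G G F''" "gfunctor G G K" "gfunctor G G K'" "gfunctor G G K''"
    using fe fe' ge ge' by auto
  have n: "nat_trans G G F F' \<eta>" "nat_trans G G F' F'' \<eta>'" "nat_trans G G K K' \<theta>" "nat_trans G G K' K'' \<theta>'"
    using fe fe' ge ge' by auto
  have comp: "cmp (cmp (\<eta>' (fst K'' a)) (\<eta> (fst K'' a))) (snd F (cmp (\<theta>' a) (\<theta> a)))
     = cmp (cmp (\<eta>' (fst K'' a)) (snd F' (\<theta>' a))) (cmp (\<eta> (fst K' a)) (snd F (\<theta> a)))" if a: "a \<in> Ob" for a
  proof -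
    have nn: "cmp (\<eta> (fst K'' a)) (snd F (\<theta>' a)) = cmp (snd F' (\<theta>' a)) (\<eta> (fst K' a))"
      using nat_trans_naturality[OF n(1), of "\<theta>' a"] n a by simp
    have "cmp (cmp (\<eta>' (fst K'' a)) (\<eta> (fst K'' a))) (snd F (cmp (\<theta>' a) (\<theta> a)))
        = cmp (\<eta>' (fst K'' a)) (cmp (cmp (\<eta> (fst K'' a)) (snd F (\<theta>' a))) (snd F (\<theta> a)))"
      using fu n a by simp
    also have "\<dots> = cmp (\<eta>' (fst K'' a)) (cmp (cmp (snd F' (\<theta>' a)) (\<eta> (fst K' a))) (snd F (\<theta> a)))"
      using nn by simp
    also have "\<dots> = cmp (cmp (\<eta>' (fst K'' a)) (snd F' (\<theta>' a))) (cmp (\<eta> (fst K' a)) (snd F (\<theta> a)))"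
      using fu n a by simp
    finally show ?thesis .
  qed
  show ?thesis using fe fe' ge ge' fu n comp by (auto intro!: restrict_ext)
qed

lemma Sym_tens_m_hom:
  assumes f: "f \<in> gArr S" and g: "g \<in> gArr S"
  shows "tens_m S f g \<in> hom S (tens_o S (gDom S f) (gDom S g)) (tens_o S (gCod S f) (gCod S g))"
proof -
  from f obtain F F' \<eta> where fe: "f = ((F, F'), \<eta>)"
    "self_equiv G F" "self_equiv G F'" "nat_trans G G F F' \<eta>"
    by (rule Sym_arrE)
  from g obtain K K' \<theta> where ge: "g = ((K, K'), \<theta>)"
    "self_equiv G K" "self_equiv G K'" "nat_trans G G K K' \<theta>"
    by (rule Sym_arrE)
  show ?thesis using fe ge nat_trans_hcomp[of F F' K K' \<eta> \<theta>] by (auto simp: Sym_hom)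
qed

lemma Sym_assoc_natural:
  assumes f: "f \<in> gArr S" and g: "g \<in> gArr S" and h: "h \<in> gArr S"
  shows "gComp S (assoc_m S (gCod S f) (gCod S g) (gCod S h)) (tens_m S (tens_m S f g) h) =
         gComp S (tens_m S f (tens_m S g h)) (assoc_m S (gDom S f) (gDom S g) (gDom S h))"
proof -
  from f obtain F F' \<eta> where fe: "f = ((F, F'), \<eta>)"
    "self_equiv G F" "self_equiv G F'" "nat_trans G G F F' \<eta>"
    by (rule Sym_arrE)
  from g obtain K K' \<theta> where ge: "g = ((K, K'), \<theta>)"
    "self_equiv G K" "self_equiv G K'" "nat_trans G G K K' \<theta>"
    by (rule Sym_arrE)
  from h obtain L L' \<kappa> where he: "h = ((L, L'), \<kappa>)"
    "self_equiv G L" "self_equiv G L'" "nat_trans G G L L' \<kappa>"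
    by (rule Sym_arrE)
  have fu: "gfunctor G G F" "gfunctor G G F'" "gfunctor G G K" "gfunctor G G K'" "gfunctor G G L" "gfunctor G G L'"
    using fe ge he by auto
  show ?thesis using fe ge he fu by (auto intro!: restrict_ext)
qed

lemma Sym_lunit_natural:
  assumes f: "f \<in> gArr S"
  shows "gComp S (lunit_m S (gCod S f)) (tens_m S (gId S (unit_o S)) f) = gComp S f (lunit_m S (gDom S f))"
proof -
  from f obtain F F' \<eta> where fe: "f = ((F, F'), \<eta>)"
    "self_equiv G F" "self_equiv G F'" "nat_trans G G F F' \<eta>"
    by (rule Sym_arrE)
  show ?thesis using fe by (auto intro!: restrict_ext)
qed

lemma Sym_runit_natural:
  assumes f: "f \<in> gArr S"
  shows "gComp S (runit_m S (gCod S f)) (tens_m S f (gId S (unit_o S))) = gComp S f (runit_m S (gDom S f))"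
proof -
  from f obtain F F' \<eta> where fe: "f = ((F, F'), \<eta>)"
    "self_equiv G F" "self_equiv G F'" "nat_trans G G F F' \<eta>"
    by (rule Sym_arrE)
  show ?thesis using fe by (auto intro!: restrict_ext)
qed

lemma Sym_pentagon:
  assumes "a \<in> gObj S" "b \<in> gObj S" "d \<in> gObj S" "e \<in> gObj S"
  shows "gComp S (tens_m S (gId S a) (assoc_m S b d e))
            (gComp S (assoc_m S a (tens_o S b d) e) (tens_m S (assoc_m S a b d) (gId S e)))
         = gComp S (assoc_m S a b (tens_o S d e)) (assoc_m S (tens_o S a b) d e)"
  using assms by (auto intro!: restrict_ext simp: comp_functor_assoc)

lemma Sym_triangle:
  assumes "a \<in> gObj S" "b \<in> gObj S"
  shows "gComp S (tens_m S (gId S a) (lunit_m S b)) (assoc_m S a (unit_o S) b) = tens_m S (runit_m S a) (gId S b)"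
  using assms by (auto intro!: restrict_ext)

lemma Sym_tens_o_obj: "a \<in> gObj S \<Longrightarrow> b \<in> gObj S \<Longrightarrow> tens_o S a b \<in> gObj S"
  and Sym_unit_obj: "unit_o S \<in> gObj S"
  by simp_all

lemma Sym_tens_m_id: "a \<in> gObj S \<Longrightarrow> b \<in> gObj S \<Longrightarrow> tens_m S (gId S a) (gId S b) = gId S (tens_o S a b)"
  by (auto intro!: restrict_ext)

lemma Sym_assoc_hom:
  assumes "a \<in> gObj S" "b \<in> gObj S" "d \<in> gObj S"
  shows "assoc_m S a b d \<in> hom S (tens_o S (tens_o S a b) d) (tens_o S a (tens_o S b d))"
proof -
  have "(\<lambda>x\<in>Ob. idt (fst a (fst b (fst d x)))) = (\<lambda>x\<in>Ob. idt (fst (comp_functor G a (comp_functor G b d)) x))"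
    by (rule restrict_ext) simp
  then show ?thesis
    using assms nat_trans_id[of "comp_functor G a (comp_functor G b d)"]
    by (simp add: Sym_hom comp_functor_assoc)
qed

lemma Sym_lunit_hom: "a \<in> gObj S \<Longrightarrow> lunit_m S a \<in> hom S (tens_o S (unit_o S) a) a"
  and Sym_runit_hom: "a \<in> gObj S \<Longrightarrow> runit_m S a \<in> hom S (tens_o S a (unit_o S)) a"
  using nat_trans_id[of a] by (auto simp: Sym_hom)

lemma Sym_monoidal: "monoidal_groupoid S"
  unfolding monoidal_groupoid_def Let_def
  by (intro conjI ballI impI)
    (blast intro: Sym_groupoid Sym_tens_o_obj Sym_tens_m_hom Sym_interchange Sym_tens_m_id Sym_unit_obj
      Sym_assoc_hom Sym_lunit_hom Sym_runit_hom Sym_assoc_natural Sym_lunit_natural Sym_runit_natural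
      Sym_pentagon Sym_triangle)+

lemma Sym_two_group: "two_group S"
  unfolding two_group_def
proof (intro conjI ballI Sym_monoidal)
  fix F assume F: "F \<in> gObj S"
  then obtain K \<eta> \<theta> where K: "self_equiv G K"
    and "nat_trans G G (comp_functor G K F) (id_functor G) \<eta>"
    and "nat_trans G G (comp_functor G F K) (id_functor G) \<theta>"
    using self_equiv_quasi_inverse[of F] by auto
  then have "((comp_functor G F K, id_functor G), \<theta>) \<in> hom S (tens_o S F K) (unit_o S)"
    and "((comp_functor G K F, id_functor G), \<eta>) \<in> hom S (tens_o S K F) (unit_o S)"
    using F by (simp_all add: Sym_hom)
  then show "\<exists>b\<in>gObj S. hom S (tens_o S F b) (unit_o S) \<noteq> {} \<and> hom S (tens_o S b F) (unit_o S) \<noteq> {}"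
    using K by (intro bexI[of _ K]) auto
qed

end

locale mon_grpd =
  fixes M :: "('a, 'b) mgpd"
  assumes monoidal: "monoidal_groupoid M"
begin

sublocale grpd M
  using monoidal unfolding monoidal_groupoid_def Let_def by (intro grpd.intro) blast

lemma tens_o_ob [simp]: "a \<in> Ob \<Longrightarrow> b \<in> Ob \<Longrightarrow> tens_o M a b \<in> Ob"
  and tens_m_hom: "f \<in> Ar \<Longrightarrow> g \<in> Ar \<Longrightarrow>
     tens_m M f g \<in> hom M (tens_o M (dm f) (dm g)) (tens_o M (cd f) (cd g))"
  and interchange: "f \<in> Ar \<Longrightarrow> f' \<in> Ar \<Longrightarrow> g \<in> Ar \<Longrightarrow> g' \<in> Ar \<Longrightarrow> cd f = dm f' \<Longrightarrow> cd g = dm g' \<Longrightarrow>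
     tens_m M (cmp f' f) (cmp g' g) = cmp (tens_m M f' g') (tens_m M f g)"
  and tens_m_id [simp]: "a \<in> Ob \<Longrightarrow> b \<in> Ob \<Longrightarrow> tens_m M (idt a) (idt b) = idt (tens_o M a b)"
  and unit_ob [simp]: "unit_o M \<in> Ob"
  and assoc_hom: "a \<in> Ob \<Longrightarrow> b \<in> Ob \<Longrightarrow> d \<in> Ob \<Longrightarrow>
     assoc_m M a b d \<in> hom M (tens_o M (tens_o M a b) d) (tens_o M a (tens_o M b d))"
  and lunit_hom: "a \<in> Ob \<Longrightarrow> lunit_m M a \<in> hom M (tens_o M (unit_o M) a) a"
  and runit_hom: "a \<in> Ob \<Longrightarrow> runit_m M a \<in> hom M (tens_o M a (unit_o M)) a"
  and assoc_natural: "f \<in> Ar \<Longrightarrow> g \<in> Ar \<Longrightarrow> h \<in> Ar \<Longrightarrow>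
     cmp (assoc_m M (cd f) (cd g) (cd h)) (tens_m M (tens_m M f g) h)
     = cmp (tens_m M f (tens_m M g h)) (assoc_m M (dm f) (dm g) (dm h))"
  and lunit_natural: "f \<in> Ar \<Longrightarrow>
     cmp (lunit_m M (cd f)) (tens_m M (idt (unit_o M)) f) = cmp f (lunit_m M (dm f))"
  and runit_natural: "f \<in> Ar \<Longrightarrow>
     cmp (runit_m M (cd f)) (tens_m M f (idt (unit_o M))) = cmp f (runit_m M (dm f))"
  and pentagon: "a \<in> Ob \<Longrightarrow> b \<in> Ob \<Longrightarrow> d \<in> Ob \<Longrightarrow> e \<in> Ob \<Longrightarrow>
     cmp (tens_m M (idt a) (assoc_m M b d e))
       (cmp (assoc_m M a (tens_o M b d) e) (tens_m M (assoc_m M a b d) (idt e)))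
     = cmp (assoc_m M a b (tens_o M d e)) (assoc_m M (tens_o M a b) d e)"
  and triangle: "a \<in> Ob \<Longrightarrow> b \<in> Ob \<Longrightarrow>
     cmp (tens_m M (idt a) (lunit_m M b)) (assoc_m M a (unit_o M) b) = tens_m M (runit_m M a) (idt b)"
  using monoidal unfolding monoidal_groupoid_def Let_def by auto

lemma tens_m_ar [simp]: "f \<in> Ar \<Longrightarrow> g \<in> Ar \<Longrightarrow> tens_m M f g \<in> Ar"
  and dm_tens_m [simp]: "f \<in> Ar \<Longrightarrow> g \<in> Ar \<Longrightarrow> dm (tens_m M f g) = tens_o M (dm f) (dm g)"
  and cd_tens_m [simp]: "f \<in> Ar \<Longrightarrow> g \<in> Ar \<Longrightarrow> cd (tens_m M f g) = tens_o M (cd f) (cd g)"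
  using tens_m_hom unfolding hom_def by blast+

lemma assoc_ar [simp]: "a \<in> Ob \<Longrightarrow> b \<in> Ob \<Longrightarrow> d \<in> Ob \<Longrightarrow> assoc_m M a b d \<in> Ar"
  and dm_assoc [simp]: "a \<in> Ob \<Longrightarrow> b \<in> Ob \<Longrightarrow> d \<in> Ob \<Longrightarrow> dm (assoc_m M a b d) = tens_o M (tens_o M a b) d"
  and cd_assoc [simp]: "a \<in> Ob \<Longrightarrow> b \<in> Ob \<Longrightarrow> d \<in> Ob \<Longrightarrow> cd (assoc_m M a b d) = tens_o M a (tens_o M b d)"
  using assoc_hom unfolding hom_def by blast+

lemma lunit_ar [simp]: "a \<in> Ob \<Longrightarrow> lunit_m M a \<in> Ar"
  and dm_lunit [simp]: "a \<in> Ob \<Longrightarrow> dm (lunit_m M a) = tens_o M (unit_o M) a"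
  and cd_lunit [simp]: "a \<in> Ob \<Longrightarrow> cd (lunit_m M a) = a"
  and runit_ar [simp]: "a \<in> Ob \<Longrightarrow> runit_m M a \<in> Ar"
  and dm_runit [simp]: "a \<in> Ob \<Longrightarrow> dm (runit_m M a) = tens_o M a (unit_o M)"
  and cd_runit [simp]: "a \<in> Ob \<Longrightarrow> cd (runit_m M a) = a"
  using lunit_hom runit_hom unfolding hom_def by blast+

end

sublocale plain_grpd \<subseteq> sym: mon_grpd "Sym G"
  by (rule mon_grpd.intro) (rule Sym_monoidal)


lemma restrict_eq_restrict_iff: "restrict a I = restrict b I \<longleftrightarrow> (\<forall>i\<in>I. a i = b i)"
  by (metis restrict_apply' restrict_ext)

locale two_group_family =
  fixes I :: "'i set" and M :: "'i \<Rightarrow> ('a, 'b) mgpd"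
  assumes two_group: "\<And>i. i \<in> I \<Longrightarrow> two_group (M i)"
begin

abbreviation "P \<equiv> prod_mgpd I M"

lemma prod_obj [simp]: "gObj P = (\<Pi>\<^sub>E i\<in>I. gObj (M i))"
  and prod_arr [simp]: "gArr P = (\<Pi>\<^sub>E i\<in>I. gArr (M i))"
  and prod_dom [simp]: "gDom P f = (\<lambda>i\<in>I. gDom (M i) (f i))"
  and prod_cod [simp]: "gCod P f = (\<lambda>i\<in>I. gCod (M i) (f i))"
  and prod_comp [simp]: "gComp P g f = (\<lambda>i\<in>I. gComp (M i) (g i) (f i))"
  and prod_id [simp]: "gId P a = (\<lambda>i\<in>I. gId (M i) (a i))"
  and prod_tens_o [simp]: "tens_o P a b = (\<lambda>i\<in>I. tens_o (M i) (a i) (b i))"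
  and prod_tens_m [simp]: "tens_m P f g = (\<lambda>i\<in>I. tens_m (M i) (f i) (g i))"
  and prod_unit [simp]: "unit_o P = (\<lambda>i\<in>I. unit_o (M i))"
  and prod_assoc [simp]: "assoc_m P a b d = (\<lambda>i\<in>I. assoc_m (M i) (a i) (b i) (d i))"
  and prod_lunit [simp]: "lunit_m P a = (\<lambda>i\<in>I. lunit_m (M i) (a i))"
  and prod_runit [simp]: "runit_m P a = (\<lambda>i\<in>I. runit_m (M i) (a i))"
  by (simp_all add: prod_mgpd_def)

lemma factor_mon_grpd: "i \<in> I \<Longrightarrow> mon_grpd (M i)"
  using two_group unfolding two_group_def by (blast intro: mon_grpd.intro)

lemma factor_grpd: "i \<in> I \<Longrightarrow> grpd (M i)"
  using two_group unfolding two_group_def monoidal_groupoid_def Let_def by (blast intro: grpd.intro)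

lemmas factor_laws [simp] =
  grpd.dm_ob[OF factor_grpd] grpd.cd_ob[OF factor_grpd]
  grpd.id_ar[OF factor_grpd] grpd.dm_id[OF factor_grpd]
  grpd.cd_id[OF factor_grpd] grpd.cmp_ar[OF factor_grpd]
  grpd.dm_cmp[OF factor_grpd] grpd.cd_cmp[OF factor_grpd]
  grpd.cmp_assoc[OF factor_grpd] grpd.cmp_id_left[OF factor_grpd]
  grpd.cmp_id_right[OF factor_grpd] grpd.inv_arr_ar[OF factor_grpd]
  grpd.dm_inv_arr[OF factor_grpd] grpd.cd_inv_arr[OF factor_grpd]
  grpd.inv_arr_cmp[OF factor_grpd] grpd.cmp_inv_arr[OF factor_grpd]
  mon_grpd.tens_o_ob[OF factor_mon_grpd] mon_grpd.unit_ob[OF factor_mon_grpd]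
  mon_grpd.tens_m_ar[OF factor_mon_grpd] mon_grpd.dm_tens_m[OF factor_mon_grpd]
  mon_grpd.cd_tens_m[OF factor_mon_grpd] mon_grpd.tens_m_id[OF factor_mon_grpd]
  mon_grpd.assoc_ar[OF factor_mon_grpd] mon_grpd.dm_assoc[OF factor_mon_grpd]
  mon_grpd.cd_assoc[OF factor_mon_grpd] mon_grpd.lunit_ar[OF factor_mon_grpd]
  mon_grpd.dm_lunit[OF factor_mon_grpd] mon_grpd.cd_lunit[OF factor_mon_grpd]
  mon_grpd.runit_ar[OF factor_mon_grpd] mon_grpd.dm_runit[OF factor_mon_grpd]
  mon_grpd.cd_runit[OF factor_mon_grpd] mon_grpd.interchange[OF factor_mon_grpd]
  mon_grpd.assoc_natural[OF factor_mon_grpd] mon_grpd.lunit_natural[OF factor_mon_grpd]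
  mon_grpd.runit_natural[OF factor_mon_grpd] mon_grpd.pentagon[OF factor_mon_grpd]
  mon_grpd.triangle[OF factor_mon_grpd]

lemma prod_groupoid: "groupoid P"
  unfolding groupoid_def
proof (intro conjI ballI impI)
  fix f assume f: "f \<in> gArr P"
  show "\<exists>g\<in>hom P (gCod P f) (gDom P f). gComp P g f = gId P (gDom P f) \<and> gComp P f g = gId P (gCod P f)"
    using f by (intro bexI[of _ "\<lambda>i\<in>I. grpd.inv_arr (M i) (f i)"])
      (auto simp: hom_def PiE_iff restrict_eq_restrict_iff)
qed (auto simp: hom_def PiE_iff restrict_eq_restrict_iff intro: extensionalityI[of _ I])

lemma prod_monoidal: "monoidal_groupoid P"
  unfolding monoidal_groupoid_def Let_def
  by (intro conjI ballI impI prod_groupoid)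
    (auto simp: hom_def PiE_iff restrict_eq_restrict_iff intro: extensionalityI[of _ I])

lemma prod_two_group: "two_group P"
  unfolding two_group_def
proof (intro conjI ballI prod_monoidal)
  fix a assume a: "a \<in> gObj P"
  have "\<forall>i\<in>I. \<exists>b h h'. b \<in> gObj (M i) \<and> h \<in> hom (M i) (tens_o (M i) (a i) b) (unit_o (M i)) \<and>
      h' \<in> hom (M i) (tens_o (M i) b (a i)) (unit_o (M i))"
    using two_group a unfolding two_group_def by fastforce
  then obtain b h h' where bh: "\<forall>i\<in>I. b i \<in> gObj (M i) \<and> h i \<in> hom (M i) (tens_o (M i) (a i) (b i)) (unit_o (M i)) \<and>
      h' i \<in> hom (M i) (tens_o (M i) (b i) (a i)) (unit_o (M i))"
    by metis
  have "restrict h I \<in> hom P (tens_o P a (restrict b I)) (unit_o P)"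
    and "restrict h' I \<in> hom P (tens_o P (restrict b I) a) (unit_o P)"
    using bh by (auto simp: hom_def restrict_eq_restrict_iff)
  moreover have "restrict b I \<in> gObj P" using bh by simp
  ultimately show "\<exists>b\<in>gObj P. hom P (tens_o P a b) (unit_o P) \<noteq> {} \<and> hom P (tens_o P b a) (unit_o P) \<noteq> {}"
    by blast
qed

end

definition strict_monoidal_functor :: "('a, 'b) mgpd \<Rightarrow> ('c, 'd) mgpd \<Rightarrow> ('a \<Rightarrow> 'c) \<times> ('b \<Rightarrow> 'd) \<Rightarrow> bool" where
  "strict_monoidal_functor M N F \<longleftrightarrow> gfunctor M N F \<and>
    (\<forall>a\<in>gObj M. \<forall>b\<in>gObj M. fst F (tens_o M a b) = tens_o N (fst F a) (fst F b)) \<and>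
    (\<forall>f\<in>gArr M. \<forall>g\<in>gArr M. snd F (tens_m M f g) = tens_m N (snd F f) (snd F g)) \<and>
    fst F (unit_o M) = unit_o N \<and>
    (\<forall>a\<in>gObj M. \<forall>b\<in>gObj M. \<forall>d\<in>gObj M.
       snd F (assoc_m M a b d) = assoc_m N (fst F a) (fst F b) (fst F d)) \<and>
    (\<forall>a\<in>gObj M. snd F (lunit_m M a) = lunit_m N (fst F a)) \<and>
    (\<forall>a\<in>gObj M. snd F (runit_m M a) = runit_m N (fst F a))"

lemma strict_monoidal_functor_monoidal:
  assumes "monoidal_groupoid M" and "monoidal_groupoid N" and F: "strict_monoidal_functor M N F"
  shows "monoidal_functor M N F (\<lambda>a b. gId N (tens_o N (fst F a) (fst F b))) (gId N (unit_o N))"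
proof -
  interpret m: mon_grpd M by (rule mon_grpd.intro) fact
  interpret n: mon_grpd N by (rule mon_grpd.intro) fact
  have "gfunctor M N F" using F strict_monoidal_functor_def by blast
  then have [simp]: "a \<in> gObj M \<Longrightarrow> fst F a \<in> gObj N"
    "f \<in> gArr M \<Longrightarrow> snd F f \<in> gArr N"
    "f \<in> gArr M \<Longrightarrow> gDom N (snd F f) = fst F (gDom M f)"
    "f \<in> gArr M \<Longrightarrow> gCod N (snd F f) = fst F (gCod M f)" for a f
    unfolding gfunctor_def hom_def by blast+
  have [simp]: "a \<in> gObj M \<Longrightarrow> b \<in> gObj M \<Longrightarrow> fst F (tens_o M a b) = tens_o N (fst F a) (fst F b)"
    "f \<in> gArr M \<Longrightarrow> g \<in> gArr M \<Longrightarrow> snd F (tens_m M f g) = tens_m N (snd F f) (snd F g)"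
    "fst F (unit_o M) = unit_o N"
    "a \<in> gObj M \<Longrightarrow> b \<in> gObj M \<Longrightarrow> d \<in> gObj M \<Longrightarrow>
       snd F (assoc_m M a b d) = assoc_m N (fst F a) (fst F b) (fst F d)"
    "a \<in> gObj M \<Longrightarrow> snd F (lunit_m M a) = lunit_m N (fst F a)"
    "a \<in> gObj M \<Longrightarrow> snd F (runit_m M a) = runit_m N (fst F a)" for a b d f g
    using F unfolding strict_monoidal_functor_def by auto
  show ?thesis
    unfolding monoidal_functor_def Let_def
    by (intro conjI ballI \<open>gfunctor M N F\<close>) (auto simp: hom_def)
qed

lemma gfunctor_inverse:
  assumes "groupoid M" and F: "gfunctor M N F"
    and "fst K \<in> extensional (gObj N)" and "snd K \<in> extensional (gArr N)"
    and K_ob: "\<And>b. b \<in> gObj N \<Longrightarrow> fst K b \<in> gObj M" and K_ar: "\<And>g. g \<in> gArr N \<Longrightarrow> snd K g \<in> gArr M"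
    and KF_ob: "\<And>a. a \<in> gObj M \<Longrightarrow> fst K (fst F a) = a" and KF_ar: "\<And>f. f \<in> gArr M \<Longrightarrow> snd K (snd F f) = f"
    and FK_ob: "\<And>b. b \<in> gObj N \<Longrightarrow> fst F (fst K b) = b" and FK_ar: "\<And>g. g \<in> gArr N \<Longrightarrow> snd F (snd K g) = g"
  shows "gfunctor N M K"
proof -
  interpret m: grpd M by (rule grpd.intro) fact
  have F_dm: "f \<in> gArr M \<Longrightarrow> gDom N (snd F f) = fst F (gDom M f)"
    and F_cd: "f \<in> gArr M \<Longrightarrow> gCod N (snd F f) = fst F (gCod M f)"
    and F_cmp: "f \<in> gArr M \<Longrightarrow> g \<in> gArr M \<Longrightarrow> gCod M f = gDom M g \<Longrightarrow>
       snd F (gComp M g f) = gComp N (snd F g) (snd F f)"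
    and F_id: "a \<in> gObj M \<Longrightarrow> snd F (gId M a) = gId N (fst F a)" for a f g
    using F unfolding gfunctor_def hom_def by blast+
  have K_dm: "gDom M (snd K g) = fst K (gDom N g)" and K_cd: "gCod M (snd K g) = fst K (gCod N g)"
    if "g \<in> gArr N" for g
    using F_dm F_cd K_ar KF_ob FK_ar that m.dm_ob m.cd_ob by metis+
  show ?thesis
    unfolding gfunctor_def
  proof (intro conjI ballI impI assms(3,4) K_ob)
    fix f assume "f \<in> gArr N"
    then show "snd K f \<in> hom M (fst K (gDom N f)) (fst K (gCod N f))"
      using K_ar K_dm K_cd by (simp add: hom_def)
  next
    fix f g assume f: "f \<in> gArr N" and g: "g \<in> gArr N" and "gCod N f = gDom N g"
    then have fg: "gCod M (snd K f) = gDom M (snd K g)" using K_dm K_cd by simp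
    have "snd K (gComp N g f) = snd K (gComp N (snd F (snd K g)) (snd F (snd K f)))"
      using FK_ar f g by simp
    also have "\<dots> = snd K (snd F (gComp M (snd K g) (snd K f)))"
      using F_cmp[OF K_ar[OF f] K_ar[OF g] fg] by simp
    also have "\<dots> = gComp M (snd K g) (snd K f)"
      using KF_ar fg f g K_ar by simp
    finally show "snd K (gComp N g f) = gComp M (snd K g) (snd K f)" .
  next
    fix a assume "a \<in> gObj N"
    then show "snd K (gId N a) = gId M (fst K a)"
      using F_id[OF K_ob] KF_ar FK_ob K_ob by (metis m.id_ar)
  qed
qed

lemma strict_monoidal_functor_inverse:
  assumes "monoidal_groupoid M" and F: "strict_monoidal_functor M N F"
    and "fst K \<in> extensional (gObj N)" and "snd K \<in> extensional (gArr N)"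
    and K_ob: "\<And>b. b \<in> gObj N \<Longrightarrow> fst K b \<in> gObj M" and K_ar: "\<And>g. g \<in> gArr N \<Longrightarrow> snd K g \<in> gArr M"
    and KF_ob: "\<And>a. a \<in> gObj M \<Longrightarrow> fst K (fst F a) = a" and KF_ar: "\<And>f. f \<in> gArr M \<Longrightarrow> snd K (snd F f) = f"
    and FK_ob: "\<And>b. b \<in> gObj N \<Longrightarrow> fst F (fst K b) = b" and FK_ar: "\<And>g. g \<in> gArr N \<Longrightarrow> snd F (snd K g) = g"
  shows "strict_monoidal_functor N M K"
proof -
  interpret m: mon_grpd M by (rule mon_grpd.intro) fact
  have "gfunctor M N F" using F strict_monoidal_functor_def by blast
  then have K: "gfunctor N M K"
    by (rule gfunctor_inverse[OF m.groupoid _ assms(3-)])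
  have F_str:
    "a \<in> gObj M \<Longrightarrow> b \<in> gObj M \<Longrightarrow> fst F (tens_o M a b) = tens_o N (fst F a) (fst F b)"
    "f \<in> gArr M \<Longrightarrow> g \<in> gArr M \<Longrightarrow> snd F (tens_m M f g) = tens_m N (snd F f) (snd F g)"
    "fst F (unit_o M) = unit_o N"
    "a \<in> gObj M \<Longrightarrow> b \<in> gObj M \<Longrightarrow> d \<in> gObj M \<Longrightarrow>
       snd F (assoc_m M a b d) = assoc_m N (fst F a) (fst F b) (fst F d)"
    "a \<in> gObj M \<Longrightarrow> snd F (lunit_m M a) = lunit_m N (fst F a)"
    "a \<in> gObj M \<Longrightarrow> snd F (runit_m M a) = runit_m N (fst F a)" for a b d f g
    using F unfolding strict_monoidal_functor_def by auto
  have K_str: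
    "a \<in> gObj N \<Longrightarrow> b \<in> gObj N \<Longrightarrow> fst K (tens_o N a b) = tens_o M (fst K a) (fst K b)"
    "f \<in> gArr N \<Longrightarrow> g \<in> gArr N \<Longrightarrow> snd K (tens_m N f g) = tens_m M (snd K f) (snd K g)"
    "fst K (unit_o N) = unit_o M"
    "a \<in> gObj N \<Longrightarrow> b \<in> gObj N \<Longrightarrow> d \<in> gObj N \<Longrightarrow>
       snd K (assoc_m N a b d) = assoc_m M (fst K a) (fst K b) (fst K d)"
    "a \<in> gObj N \<Longrightarrow> snd K (lunit_m N a) = lunit_m M (fst K a)"
    "a \<in> gObj N \<Longrightarrow> snd K (runit_m N a) = runit_m M (fst K a)" for a b d f g
    by (metis F_str(1) KF_ob FK_ob K_ob m.tens_o_ob, metis F_str(2) KF_ar FK_ar K_ar m.tens_m_ar,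
        metis F_str(3) KF_ob m.unit_ob, metis F_str(4) KF_ar FK_ob K_ob m.assoc_ar,
        metis F_str(5) KF_ar FK_ob K_ob m.lunit_ar, metis F_str(6) KF_ar FK_ob K_ob m.runit_ar)
  show ?thesis
    unfolding strict_monoidal_functor_def using K K_str by blast
qed

section \<open>Automorphism groups and homogeneous components\<close>

context plain_grpd
begin

lemma aut_carrier [simp]: "carrier (aut G x) = hom G x x"
  and aut_mult [simp]: "mult (aut G x) = cmp"
  and aut_one [simp]: "one (aut G x) = idt x"
  by (simp_all add: aut_def)

lemma aut_group:
  assumes "x \<in> Ob"
  shows "group (aut G x)"
proof (rule groupI)
  fix f assume "f \<in> carrier (aut G x)"
  then show "\<exists>g\<in>carrier (aut G x). g \<otimes>\<^bsub>aut G x\<^esub> f = \<one>\<^bsub>aut G x\<^esub>"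
    by (intro bexI[of _ "inv_arr f"]) (auto simp: hom_iff)
qed (use assms in \<open>auto simp: hom_iff\<close>)

lemma aut_iso_sym: "x \<in> Ob \<Longrightarrow> aut G x \<cong> H \<Longrightarrow> H \<cong> aut G x"
  by (rule group.iso_sym[OF aut_group])

lemma aut_iso_if_hom:
  assumes f: "f \<in> hom G x y"
  shows "aut G x \<cong> aut G y"
proof (rule is_isoI, rule isoI)
  have f_ar: "f \<in> Ar" "dm f = x" "cd f = y" using f hom_iff by auto
  show "(\<lambda>g. cmp f (cmp g (inv_arr f))) \<in> Group.hom (aut G x) (aut G y)"
    unfolding Group.hom_def using f_ar by (auto simp: hom_iff)
  show "bij_betw (\<lambda>g. cmp f (cmp g (inv_arr f))) (carrier (aut G x)) (carrier (aut G y))"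
    by (rule bij_betwI[where g = "\<lambda>g. cmp (inv_arr f) (cmp g f)"]) (use f_ar in \<open>auto simp: hom_iff\<close>)
qed

lemma aut_iso_self_equiv:
  assumes F: "self_equiv G F" and z: "z \<in> Ob"
  shows "aut G z \<cong> aut G (fst F z)"
proof (rule is_isoI, rule isoI)
  obtain K \<eta> where K: "self_equiv G K" and \<eta>: "nat_trans G G (comp_functor G K F) (id_functor G) \<eta>"
    using self_equiv_quasi_inverse[OF F] by blast
  have FK: "gfunctor G G F" "gfunctor G G K" using F K by auto
  show "snd F \<in> Group.hom (aut G z) (aut G (fst F z))"
    unfolding Group.hom_def using FK z by (auto simp: hom_iff)
  have "inj_on (snd F) (hom G z z)"
    using faithful_if_left_quasi_inverse[OF FK(2,1) \<eta>] FK by (auto simp: inj_on_def hom_iff)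
  moreover have "snd F ` hom G z z = hom G (fst F z) (fst F z)"
    using FK self_equiv_full[OF F z z] z by (fastforce simp: hom_iff)
  ultimately show "bij_betw (snd F) (carrier (aut G z)) (carrier (aut G (fst F z)))"
    by (simp add: bij_betw_def)
qed

definition homog_class :: "'o \<Rightarrow> 'o set" where
  "homog_class x = {z \<in> Ob. aut G z \<cong> aut G x}"

lemma homog_components_eq: "homog_components G = homog_class ` Ob"
proof -
  have "\<Union>{conn_component G y | y. y \<in> Ob \<and> aut G y \<cong> aut G x} = homog_class x" if x: "x \<in> Ob" for x
  proof (intro equalityI subsetI)
    fix z assume "z \<in> \<Union>{conn_component G y | y. y \<in> Ob \<and> aut G y \<cong> aut G x}"
    then obtain y f where "y \<in> Ob" "aut G y \<cong> aut G x" "z \<in> Ob" "f \<in> hom G y z"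
      unfolding conn_component_def by blast
    then show "z \<in> homog_class x"
      using aut_iso_if_hom[of "inv_arr f" z y] iso_trans unfolding homog_class_def by (auto simp: hom_iff)
  next
    fix z assume z: "z \<in> homog_class x"
    then have "idt z \<in> hom G z z"
      unfolding homog_class_def by (simp add: hom_iff)
    then have "z \<in> conn_component G z"
      using z unfolding conn_component_def homog_class_def by blast
    then show "z \<in> \<Union>{conn_component G y | y. y \<in> Ob \<and> aut G y \<cong> aut G x}"
      using z unfolding homog_class_def by blast
  qed
  then show ?thesis unfolding homog_components_def by blast
qed

lemma homog_class_subset: "homog_class x \<subseteq> Ob"
  and homog_class_self: "x \<in> Ob \<Longrightarrow> x \<in> homog_class x"
  unfolding homog_class_def by (auto intro: iso_refl)

lemma homog_class_eq: "z \<in> homog_class x \<Longrightarrow> homog_class z = homog_class x"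
  unfolding homog_class_def using iso_trans aut_iso_sym by blast

lemma homog_components_subset: "C \<in> homog_components G \<Longrightarrow> C \<subseteq> Ob"
  and homog_class_in_components: "a \<in> Ob \<Longrightarrow> homog_class a \<in> homog_components G"
  and homog_class_of_mem: "C \<in> homog_components G \<Longrightarrow> a \<in> C \<Longrightarrow> homog_class a = C"
  using homog_components_eq homog_class_subset homog_class_eq by auto

lemma homog_class_cd: "f \<in> Ar \<Longrightarrow> homog_class (cd f) = homog_class (dm f)"
  using aut_iso_if_hom[of "inv_arr f" "cd f" "dm f"]
  by (intro homog_class_eq) (simp add: homog_class_def hom_iff)

lemma self_equiv_homog_class:
  assumes "self_equiv G F" and "z \<in> Ob"
  shows "homog_class (fst F z) = homog_class z"
  using assms aut_iso_self_equiv[OF assms] aut_iso_sym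
  by (intro homog_class_eq) (simp add: homog_class_def)

lemma self_equiv_homog_component:
  assumes F: "self_equiv G F" and C: "C \<in> homog_components G" and z: "z \<in> C"
  shows "fst F z \<in> C"
proof -
  have z_ob: "z \<in> Ob" using homog_components_subset[OF C] z by blast
  then have "fst F z \<in> homog_class (fst F z)"
    using F by (simp add: homog_class_self)
  also have "homog_class (fst F z) = C"
    using self_equiv_homog_class[OF F z_ob] homog_class_of_mem[OF C z] by simp
  finally show ?thesis .
qed

lemma homog_component_arr:
  assumes C: "C \<in> homog_components G" and f: "f \<in> Ar" and "dm f \<in> C"
  shows "cd f \<in> C"
proof -
  have "cd f \<in> homog_class (cd f)" using f by (simp add: homog_class_self)
  then show ?thesis using homog_class_cd[OF f] homog_class_of_mem[OF C \<open>dm f \<in> C\<close>] by simp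
qed

end

definition restr_functor :: "('o, 'm) gpd \<Rightarrow> 'o set \<Rightarrow> ('o, 'm) sobj \<Rightarrow> ('o, 'm) sobj" where
  "restr_functor G C F = (restrict (fst F) C, restrict (snd F) (gArr (full_sub G C)))"

locale homog_component = plain_grpd G for G :: "('o, 'm) gpd" +
  fixes C :: "'o set"
  assumes C: "C \<in> homog_components G"
begin

abbreviation "H \<equiv> full_sub G C"
abbreviation "ArC \<equiv> gArr H"

lemma C_subset: "C \<subseteq> Ob"
  using homog_components_subset[OF C] .

lemma H_obj [simp]: "gObj H = C"
  and H_dom [simp]: "gDom H = dm"
  and H_cod [simp]: "gCod H = cd"
  and H_comp [simp]: "gComp H = cmp"
  and H_id [simp]: "gId H = idt"
  and H_arr: "f \<in> ArC \<longleftrightarrow> f \<in> Ar \<and> dm f \<in> C \<and> cd f \<in> C"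
  by (simp_all add: full_sub_def)

lemma H_arr_iff_dm: "f \<in> ArC \<longleftrightarrow> f \<in> Ar \<and> dm f \<in> C"
  using H_arr homog_component_arr[OF C] by blast

sublocale h: plain_grpd H
  by (intro plain_grpd.intro grpd.intro full_sub_groupoid groupoid C_subset)

lemma self_equiv_maps_C: "self_equiv G F \<Longrightarrow> z \<in> C \<Longrightarrow> fst F z \<in> C"
  using self_equiv_homog_component[OF _ C] by blast

lemma self_equiv_arr_H: "self_equiv G F \<Longrightarrow> f \<in> ArC \<Longrightarrow> snd F f \<in> ArC"
  using self_equiv_maps_C by (simp add: H_arr)

lemma restr_functor_fst: "fst (restr_functor G C F) = restrict (fst F) C"
  and restr_functor_snd: "snd (restr_functor G C F) = restrict (snd F) ArC"
  by (simp_all add: restr_functor_def)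

lemma gfunctor_restr_functor:
  assumes F: "self_equiv G F"
  shows "gfunctor H H (restr_functor G C F)"
  unfolding gfunctor_def restr_functor_fst restr_functor_snd
  using F C_subset self_equiv_maps_C[OF F] by (auto simp: hom_def H_arr)

lemma restr_functor_comp:
  assumes "self_equiv G F" and K: "self_equiv G K"
  shows "restr_functor G C (comp_functor G F K) = comp_functor H (restr_functor G C F) (restr_functor G C K)"
proof -
  have "restrict (fst (comp_functor G F K)) C = (\<lambda>a\<in>C. restrict (fst F) C (restrict (fst K) C a))"
    using self_equiv_maps_C[OF K] C_subset by (auto intro!: restrict_ext)
  moreover have "restrict (snd (comp_functor G F K)) ArC = (\<lambda>f\<in>ArC. restrict (snd F) ArC (restrict (snd K) ArC f))"
    using self_equiv_arr_H[OF K] by (auto intro!: restrict_ext simp: H_arr)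
  ultimately show ?thesis
    unfolding restr_functor_def comp_functor_def[of H] by simp
qed

lemma restr_functor_id: "restr_functor G C (id_functor G) = id_functor H"
  unfolding restr_functor_def id_functor_def
  using C_subset by (auto intro!: restrict_ext simp: H_arr Int_absorb1[OF C_subset])

lemma nat_trans_restr_functor:
  assumes A: "self_equiv G A" and B: "self_equiv G B" and \<eta>: "nat_trans G G A B \<eta>"
  shows "nat_trans H H (restr_functor G C A) (restr_functor G C B) (restrict \<eta> C)"
  unfolding nat_trans_def restr_functor_fst restr_functor_snd
  using \<eta> C_subset self_equiv_maps_C[OF A] self_equiv_maps_C[OF B] nat_trans_naturality[OF \<eta>]
  by (auto simp: hom_def H_arr)

lemma self_equiv_restr_functor:
  assumes F: "self_equiv G F"
  shows "self_equiv H (restr_functor G C F)"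
proof -
  obtain K \<eta> \<theta> where K: "self_equiv G K"
    and \<eta>: "nat_trans G G (comp_functor G K F) (id_functor G) \<eta>"
    and \<theta>: "nat_trans G G (comp_functor G F K) (id_functor G) \<theta>"
    using self_equiv_quasi_inverse[OF F] by blast
  have "nat_trans H H (comp_functor H (restr_functor G C K) (restr_functor G C F)) (id_functor H) (restrict \<eta> C)"
    using nat_trans_restr_functor[OF self_equiv_comp[OF K F] self_equiv_id \<eta>]
    by (simp add: restr_functor_comp[OF K F] restr_functor_id)
  moreover have "nat_trans H H (comp_functor H (restr_functor G C F) (restr_functor G C K)) (id_functor H) (restrict \<theta> C)"
    using nat_trans_restr_functor[OF self_equiv_comp[OF F K] self_equiv_id \<theta>]
    by (simp add: restr_functor_comp[OF F K] restr_functor_id)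
  ultimately show ?thesis
    unfolding self_equiv_def using gfunctor_restr_functor F K by blast
qed

lemma restr_o_apply: "F \<in> gObj S \<Longrightarrow> restr_o G F C = restr_functor G C F"
  unfolding restr_o_def restr_functor_def using C by simp

lemma restr_m_apply:
  "u \<in> gArr S \<Longrightarrow>
   restr_m G u C = ((restr_functor G C (fst (fst u)), restr_functor G C (snd (fst u))), restrict (snd u) C)"
  unfolding restr_m_def restr_functor_def using C by simp

lemma restr_m_arr: "u \<in> gArr S \<Longrightarrow> restr_m G u C \<in> gArr h.S"
  by (auto simp: restr_m_apply Sym_arr Sym_arr self_equiv_restr_functor nat_trans_restr_functor)

lemma restr_m_dom: "u \<in> gArr S \<Longrightarrow> gDom h.S (restr_m G u C) = restr_functor G C (gDom S u)"
  and restr_m_cod: "u \<in> gArr S \<Longrightarrow> gCod h.S (restr_m G u C) = restr_functor G C (gCod S u)"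
  by (simp_all add: restr_m_apply)

lemma restr_m_comp:
  assumes "u \<in> gArr S" and "v \<in> gArr S" and "gCod S u = gDom S v"
  shows "restr_m G (gComp S v u) C = gComp h.S (restr_m G v C) (restr_m G u C)"
  using sym.cmp_ar[OF assms] assms C_subset
  by (auto simp: restr_m_apply Int_absorb1[OF C_subset] intro!: restrict_ext)

lemma restr_m_id: "F \<in> gObj S \<Longrightarrow> restr_m G (gId S F) C = gId h.S (restr_o G F C)"
  using sym.id_ar[of F] C_subset
  by (auto simp: restr_m_apply restr_o_apply restr_functor_fst Int_absorb1[OF C_subset] intro!: restrict_ext)

lemma restr_m_tens_m:
  assumes u: "u \<in> gArr S" and v: "v \<in> gArr S"
  shows "restr_m G (tens_m S u v) C = tens_m h.S (restr_m G u C) (restr_m G v C)"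
proof -
  obtain F F' \<eta> where u_eq: "u = ((F, F'), \<eta>)" and F: "self_equiv G F" "self_equiv G F'"
    and \<eta>: "nat_trans G G F F' \<eta>"
    using u by (rule Sym_arrE)
  obtain K K' \<theta> where v_eq: "v = ((K, K'), \<theta>)" and K: "self_equiv G K" "self_equiv G K'"
    and \<theta>: "nat_trans G G K K' \<theta>"
    using v by (rule Sym_arrE)
  have "restrict (\<lambda>a\<in>Ob. cmp (\<eta> (fst K' a)) (snd F (\<theta> a))) C =
     (\<lambda>a\<in>C. cmp (restrict \<eta> C (fst (restr_functor G C K') a)) (snd (restr_functor G C F) (restrict \<theta> C a)))"
  proof (rule restrict_ext)
    fix a assume a: "a \<in> C"
    then have "a \<in> Ob" "fst K' a \<in> C" "\<theta> a \<in> ArC"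
      using C_subset self_equiv_maps_C[OF K(1) a] self_equiv_maps_C[OF K(2) a] \<theta> by (auto simp: H_arr)
    then show "(\<lambda>a\<in>Ob. cmp (\<eta> (fst K' a)) (snd F (\<theta> a))) a
        = cmp (restrict \<eta> C (fst (restr_functor G C K') a)) (snd (restr_functor G C F) (restrict \<theta> C a))"
      using a by (simp add: restr_functor_fst restr_functor_snd)
  qed
  then show ?thesis
    using sym.tens_m_ar[OF u v] u v F K
    by (simp add: restr_m_apply u_eq v_eq restr_functor_comp)
qed

lemma restr_m_assoc:
  assumes "A \<in> gObj S" "B \<in> gObj S" "D \<in> gObj S"
  shows "restr_m G (assoc_m S A B D) C = assoc_m h.S (restr_o G A C) (restr_o G B C) (restr_o G D C)"
proof -
  have se: "self_equiv G A" "self_equiv G B" "self_equiv G D" using assms by simp_all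
  show ?thesis
    using sym.assoc_ar[OF assms] C_subset self_equiv_maps_C[OF se(2)] self_equiv_maps_C[OF se(3)] assms
    by (auto intro!: restrict_ext simp: restr_m_apply restr_o_apply restr_functor_comp restr_functor_fst
        Int_absorb1[OF C_subset])
qed

lemma restr_m_lunit: "A \<in> gObj S \<Longrightarrow> restr_m G (lunit_m S A) C = lunit_m h.S (restr_o G A C)"
  and restr_m_runit: "A \<in> gObj S \<Longrightarrow> restr_m G (runit_m S A) C = runit_m h.S (restr_o G A C)"
  using sym.lunit_ar sym.runit_ar C_subset gfunctor_restr_functor[of A]
  by (auto intro!: restrict_ext simp: restr_m_apply restr_o_apply restr_functor_comp restr_functor_id
      restr_functor_fst Int_absorb1[OF C_subset])

end

section \<open>Gluing functors and natural transformations along the homogeneous components\<close>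

context plain_grpd
begin

abbreviation "I \<equiv> homog_components G"

lemma homog_componentI: "C \<in> I \<Longrightarrow> homog_component G C"
  by (intro homog_component.intro homog_component_axioms.intro plain_grpd_axioms)

lemma homog_class_component: "a \<in> Ob \<Longrightarrow> homog_component G (homog_class a)"
  by (rule homog_componentI[OF homog_class_in_components])

lemma component_grpd: "C \<in> I \<Longrightarrow> grpd (full_sub G C)"
  using full_sub_groupoid[OF groupoid homog_components_subset] grpd.intro by blast

lemma arr_in_homog_class: "f \<in> Ar \<Longrightarrow> f \<in> gArr (full_sub G (homog_class (dm f)))"
  using homog_component.H_arr_iff_dm[OF homog_class_component] homog_class_self by simp

definition glue :: "('o set \<Rightarrow> ('o, 'm) sobj) \<Rightarrow> ('o, 'm) sobj" where
  "glue \<Phi> = ((\<lambda>a\<in>Ob. fst (\<Phi> (homog_class a)) a), (\<lambda>f\<in>Ar. snd (\<Phi> (homog_class (dm f))) f))"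

lemma glue_fst [simp]: "a \<in> Ob \<Longrightarrow> fst (glue \<Phi>) a = fst (\<Phi> (homog_class a)) a"
  and glue_snd [simp]: "f \<in> Ar \<Longrightarrow> snd (glue \<Phi>) f = snd (\<Phi> (homog_class (dm f))) f"
  by (simp_all add: glue_def)

lemma gfunctor_glue:
  assumes \<Phi>: "\<And>C. C \<in> I \<Longrightarrow> gfunctor (full_sub G C) (full_sub G C) (\<Phi> C)"
  shows "gfunctor G G (glue \<Phi>)"
  unfolding gfunctor_def
proof (intro conjI ballI impI)
  show "fst (glue \<Phi>) \<in> extensional Ob" "snd (glue \<Phi>) \<in> extensional Ar" by (simp_all add: glue_def)
next
  fix a assume a: "a \<in> Ob"
  interpret c: homog_component G "homog_class a" by (rule homog_class_component[OF a])
  have F: "gfunctor c.H c.H (\<Phi> (homog_class a))" using \<Phi> c.C by blast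
  show "fst (glue \<Phi>) a \<in> Ob" using c.h.functor_ob[OF F, of a] homog_class_self[OF a] a c.C_subset by auto
  show "snd (glue \<Phi>) (idt a) = idt (fst (glue \<Phi>) a)"
    using c.h.functor_id[OF F, of a] homog_class_self[OF a] a by simp
next
  fix f assume f: "f \<in> Ar"
  interpret c: homog_component G "homog_class (dm f)" by (rule homog_class_component) (simp add: f)
  have F: "gfunctor c.H c.H (\<Phi> (homog_class (dm f)))" using \<Phi> c.C by blast
  have fi: "f \<in> c.ArC" using arr_in_homog_class[OF f] .
  have "snd (\<Phi> (homog_class (dm f))) f \<in> c.ArC" using c.h.functor_ar[OF F fi] .
  thus "snd (glue \<Phi>) f \<in> hom G (fst (glue \<Phi>) (dm f)) (fst (glue \<Phi>) (cd f))"
    using c.h.dm_functor[OF F fi] c.h.cd_functor[OF F fi] f homog_class_cd[OF f] by (simp add: hom_iff c.H_arr)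
next
  fix f g assume f: "f \<in> Ar" and g: "g \<in> Ar" and e: "cd f = dm g"
  interpret c: homog_component G "homog_class (dm f)" by (rule homog_class_component) (simp add: f)
  have F: "gfunctor c.H c.H (\<Phi> (homog_class (dm f)))" using \<Phi> c.C by blast
  have fi: "f \<in> c.ArC" using arr_in_homog_class[OF f] .
  have hg: "homog_class (dm g) = homog_class (dm f)" using homog_class_cd[OF f] e by simp
  have gi: "g \<in> c.ArC" using arr_in_homog_class[OF g] hg by simp
  show "snd (glue \<Phi>) (cmp g f) = cmp (snd (glue \<Phi>) g) (snd (glue \<Phi>) f)"
    using c.h.functor_cmp[OF F fi gi] e f g hg by simp
qed

lemma glue_cong: "(\<And>C. C \<in> I \<Longrightarrow> \<Phi> C = \<Psi> C) \<Longrightarrow> glue \<Phi> = glue \<Psi>"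
  unfolding glue_def using homog_class_in_components by (auto intro!: restrict_ext)

lemma glue_comp:
  assumes \<Phi>: "\<And>C. C \<in> I \<Longrightarrow> gfunctor (full_sub G C) (full_sub G C) (\<Phi> C)"
    and \<Psi>: "\<And>C. C \<in> I \<Longrightarrow> gfunctor (full_sub G C) (full_sub G C) (\<Psi> C)"
  shows "comp_functor G (glue \<Phi>) (glue \<Psi>) = glue (\<lambda>C. comp_functor (full_sub G C) (\<Phi> C) (\<Psi> C))"
proof (rule functor_eqI)
  show "gfunctor G G (comp_functor G (glue \<Phi>) (glue \<Psi>))" using gfunctor_glue[OF \<Phi>] gfunctor_glue[OF \<Psi>] by simp
  show "gfunctor G G (glue (\<lambda>C. comp_functor (full_sub G C) (\<Phi> C) (\<Psi> C)))"
    by (rule gfunctor_glue, rule grpd.gfunctor_comp[OF component_grpd]) (auto intro: \<Phi> \<Psi>)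
next
  fix a assume a: "a \<in> Ob"
  interpret c: homog_component G "homog_class a" by (rule homog_class_component[OF a])
  have F: "gfunctor c.H c.H (\<Phi> (homog_class a))" "gfunctor c.H c.H (\<Psi> (homog_class a))" using \<Phi> \<Psi> c.C by blast+
  have ai: "a \<in> homog_class a" using homog_class_self[OF a] .
  have b: "fst (\<Psi> (homog_class a)) a \<in> homog_class a" using c.h.functor_ob[OF F(2), of a] ai by simp
  hence bo: "fst (\<Psi> (homog_class a)) a \<in> Ob" using c.C_subset by blast
  have hb: "homog_class (fst (\<Psi> (homog_class a)) a) = homog_class a" using homog_class_of_mem[OF c.C b] .
  show "fst (comp_functor G (glue \<Phi>) (glue \<Psi>)) a = fst (glue (\<lambda>C. comp_functor (full_sub G C) (\<Phi> C) (\<Psi> C))) a"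
    using a bo hb ai by (simp add: c.h.comp_functor_fst[simplified])
next
  fix f assume f: "f \<in> Ar"
  interpret c: homog_component G "homog_class (dm f)" by (rule homog_class_component) (simp add: f)
  have F: "gfunctor c.H c.H (\<Phi> (homog_class (dm f)))" "gfunctor c.H c.H (\<Psi> (homog_class (dm f)))" using \<Phi> \<Psi> c.C by blast+
  have fi: "f \<in> c.ArC" using arr_in_homog_class[OF f] .
  have g: "snd (\<Psi> (homog_class (dm f))) f \<in> c.ArC" using c.h.functor_ar[OF F(2) fi] .
  have gd: "dm (snd (\<Psi> (homog_class (dm f))) f) \<in> homog_class (dm f)" using g c.H_arr by blast
  have ga: "snd (\<Psi> (homog_class (dm f))) f \<in> Ar" using g c.H_arr by blast
  have hb: "homog_class (dm (snd (\<Psi> (homog_class (dm f))) f)) = homog_class (dm f)" using homog_class_of_mem[OF c.C gd] .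
  show "snd (comp_functor G (glue \<Phi>) (glue \<Psi>)) f = snd (glue (\<lambda>C. comp_functor (full_sub G C) (\<Phi> C) (\<Psi> C))) f"
    using f ga hb fi by (simp add: c.h.comp_functor_snd[simplified])
qed

lemma glue_id: "glue (\<lambda>C. id_functor (full_sub G C)) = id_functor G"
proof (rule functor_eqI)
  show "gfunctor G G (glue (\<lambda>C. id_functor (full_sub G C)))"
    by (rule gfunctor_glue, rule grpd.gfunctor_id[OF component_grpd])
next
  fix a assume a: "a \<in> Ob"
  interpret c: homog_component G "homog_class a" by (rule homog_class_component[OF a])
  show "fst (glue (\<lambda>C. id_functor (full_sub G C))) a = fst (id_functor G) a"
    using a homog_class_self[OF a] by (simp add: id_functor_def full_sub_def)
next
  fix f assume f: "f \<in> Ar"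
  show "snd (glue (\<lambda>C. id_functor (full_sub G C))) f = snd (id_functor G) f"
    using f arr_in_homog_class[OF f] by (simp add: id_functor_def)
qed simp

lemma nat_trans_glue:
  assumes \<Phi>: "\<And>C. C \<in> I \<Longrightarrow> gfunctor (full_sub G C) (full_sub G C) (\<Phi> C)"
    and \<Psi>: "\<And>C. C \<in> I \<Longrightarrow> gfunctor (full_sub G C) (full_sub G C) (\<Psi> C)"
    and n: "\<And>C. C \<in> I \<Longrightarrow> nat_trans (full_sub G C) (full_sub G C) (\<Phi> C) (\<Psi> C) (\<eta> C)"
  shows "nat_trans G G (glue \<Phi>) (glue \<Psi>) (\<lambda>a\<in>Ob. \<eta> (homog_class a) a)"
proof (rule nat_transI)
  fix a assume a: "a \<in> Ob"
  interpret c: homog_component G "homog_class a" by (rule homog_class_component[OF a])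
  have N: "nat_trans c.H c.H (\<Phi> (homog_class a)) (\<Psi> (homog_class a)) (\<eta> (homog_class a))" using n c.C by blast
  have ai: "a \<in> gObj c.H" using homog_class_self[OF a] by simp
  show "(\<lambda>a\<in>Ob. \<eta> (homog_class a) a) a \<in> Ar" "dm ((\<lambda>a\<in>Ob. \<eta> (homog_class a) a) a) = fst (glue \<Phi>) a"
       "cd ((\<lambda>a\<in>Ob. \<eta> (homog_class a) a) a) = fst (glue \<Psi>) a"
    using c.h.nat_trans_ar[OF N ai] c.h.dm_nat_trans[OF N ai] c.h.cd_nat_trans[OF N ai] a by (simp_all add: c.H_arr)
next
  fix f assume f: "f \<in> Ar"
  interpret c: homog_component G "homog_class (dm f)" by (rule homog_class_component) (simp add: f)
  have N: "nat_trans c.H c.H (\<Phi> (homog_class (dm f))) (\<Psi> (homog_class (dm f))) (\<eta> (homog_class (dm f)))" using n c.C by blast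
  have fi: "f \<in> c.ArC" using arr_in_homog_class[OF f] .
  show "cmp ((\<lambda>a\<in>Ob. \<eta> (homog_class a) a) (cd f)) (snd (glue \<Phi>) f) = cmp (snd (glue \<Psi>) f) ((\<lambda>a\<in>Ob. \<eta> (homog_class a) a) (dm f))"
    using c.h.nat_trans_naturality[OF N fi] f homog_class_cd[OF f] by simp
qed simp

lemma self_equiv_glue:
  assumes \<Phi>: "\<And>C. C \<in> I \<Longrightarrow> self_equiv (full_sub G C) (\<Phi> C)"
  shows "self_equiv G (glue \<Phi>)"
proof -
  have "\<forall>C\<in>I. \<exists>K \<eta> \<theta>. self_equiv (full_sub G C) K \<and>
      nat_trans (full_sub G C) (full_sub G C) (comp_functor (full_sub G C) K (\<Phi> C)) (id_functor (full_sub G C)) \<eta> \<and>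
      nat_trans (full_sub G C) (full_sub G C) (comp_functor (full_sub G C) (\<Phi> C) K) (id_functor (full_sub G C)) \<theta>"
    using grpd.self_equiv_quasi_inverse[OF component_grpd \<Phi>] by blast
  then obtain K \<eta> \<theta> where K: "\<And>C. C \<in> I \<Longrightarrow> self_equiv (full_sub G C) (K C)"
    and \<eta>: "\<And>C. C \<in> I \<Longrightarrow>
      nat_trans (full_sub G C) (full_sub G C) (comp_functor (full_sub G C) (K C) (\<Phi> C)) (id_functor (full_sub G C)) (\<eta> C)"
    and \<theta>: "\<And>C. C \<in> I \<Longrightarrow>
      nat_trans (full_sub G C) (full_sub G C) (comp_functor (full_sub G C) (\<Phi> C) (K C)) (id_functor (full_sub G C)) (\<theta> C)"
    by metis
  have funs: "gfunctor (full_sub G C) (full_sub G C) (\<Phi> C)" "gfunctor (full_sub G C) (full_sub G C) (K C)"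
    "gfunctor (full_sub G C) (full_sub G C) (comp_functor (full_sub G C) (K C) (\<Phi> C))"
    "gfunctor (full_sub G C) (full_sub G C) (comp_functor (full_sub G C) (\<Phi> C) (K C))"
    "gfunctor (full_sub G C) (full_sub G C) (id_functor (full_sub G C))" if "C \<in> I" for C
    using grpd.self_equiv_functor[OF component_grpd[OF that]] grpd.gfunctor_comp[OF component_grpd[OF that]]
      grpd.gfunctor_id[OF component_grpd[OF that]] \<Phi>[OF that] K[OF that] by blast+
  have "nat_trans G G (comp_functor G (glue K) (glue \<Phi>)) (id_functor G) (\<lambda>a\<in>Ob. \<eta> (homog_class a) a)"
    using nat_trans_glue[OF funs(3) funs(5) \<eta>] by (simp add: glue_comp[OF funs(2) funs(1)] glue_id)
  moreover have "nat_trans G G (comp_functor G (glue \<Phi>) (glue K)) (id_functor G) (\<lambda>a\<in>Ob. \<theta> (homog_class a) a)"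
    using nat_trans_glue[OF funs(4) funs(5) \<theta>] by (simp add: glue_comp[OF funs(1) funs(2)] glue_id)
  ultimately show ?thesis
    unfolding self_equiv_def using gfunctor_glue[OF funs(1)] gfunctor_glue[OF funs(2)] by blast
qed

lemma restr_functor_glue:
  assumes C: "C \<in> I" and \<Phi>: "\<And>C. C \<in> I \<Longrightarrow> gfunctor (full_sub G C) (full_sub G C) (\<Phi> C)"
  shows "restr_functor G C (glue \<Phi>) = \<Phi> C"
proof -
  interpret c: homog_component G C by (rule homog_componentI[OF C])
  have F: "gfunctor c.H c.H (\<Phi> C)" using \<Phi>[OF C] .
  have "restrict (fst (glue \<Phi>)) C = fst (\<Phi> C)"
  proof (rule extensionalityI[of _ C])
    show "fst (\<Phi> C) \<in> extensional C" using c.h.functor_ob_extensional[OF F] by simp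
    fix a assume a: "a \<in> C"
    have ao: "a \<in> Ob" using a c.C_subset by blast
    show "restrict (fst (glue \<Phi>)) C a = fst (\<Phi> C) a" using a ao homog_class_of_mem[OF C a] by simp
  qed simp
  moreover have "restrict (snd (glue \<Phi>)) c.ArC = snd (\<Phi> C)"
  proof (rule extensionalityI[of _ c.ArC])
    show "snd (\<Phi> C) \<in> extensional c.ArC" using c.h.functor_ar_extensional[OF F] .
    fix f assume f: "f \<in> c.ArC"
    have fa: "f \<in> Ar" "dm f \<in> C" using f c.H_arr by auto
    show "restrict (snd (glue \<Phi>)) c.ArC f = snd (\<Phi> C) f" using f fa homog_class_of_mem[OF C fa(2)] by simp
  qed simp
  ultimately show ?thesis by (simp add: restr_functor_def prod_eq_iff)
qed

lemma glue_restr_functor: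
  assumes F: "gfunctor G G F"
  shows "glue (\<lambda>C. restr_functor G C F) = F"
proof -
  have "fst (glue (\<lambda>C. restr_functor G C F)) = fst F"
  proof (rule extensionalityI[of _ Ob])
    show "fst (glue (\<lambda>C. restr_functor G C F)) \<in> extensional Ob" by (simp add: glue_def)
    show "fst F \<in> extensional Ob" by (rule functor_ob_extensional[OF F])
    fix a assume a: "a \<in> Ob"
    show "fst (glue (\<lambda>C. restr_functor G C F)) a = fst F a" using a homog_class_self[OF a] by (simp add: restr_functor_def)
  qed
  moreover have "snd (glue (\<lambda>C. restr_functor G C F)) = snd F"
  proof (rule extensionalityI[of _ Ar])
    show "snd (glue (\<lambda>C. restr_functor G C F)) \<in> extensional Ar" by (simp add: glue_def)
    show "snd F \<in> extensional Ar" by (rule functor_ar_extensional[OF F])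
    fix f assume f: "f \<in> Ar"
    show "snd (glue (\<lambda>C. restr_functor G C F)) f = snd F f" using f arr_in_homog_class[OF f] by (simp add: restr_functor_def)
  qed
  ultimately show ?thesis by (simp add: prod_eq_iff)
qed

definition glue_arr :: "('o set \<Rightarrow> ('o, 'm) smor) \<Rightarrow> ('o, 'm) smor" where
  "glue_arr w = ((glue (\<lambda>C. fst (fst (w C))), glue (\<lambda>C. snd (fst (w C)))), (\<lambda>a\<in>Ob. snd (w (homog_class a)) a))"

lemma glue_arr_arr:
  assumes w: "\<And>C. C \<in> I \<Longrightarrow> w C \<in> gArr (Sym (full_sub G C))"
  shows "glue_arr w \<in> gArr S"
proof -
  have W: "self_equiv (full_sub G C) (fst (fst (w C))) \<and> self_equiv (full_sub G C) (snd (fst (w C))) \<and>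
     nat_trans (full_sub G C) (full_sub G C) (fst (fst (w C))) (snd (fst (w C))) (snd (w C))" if C: "C \<in> I" for C
    using w[OF C] Sym_arr by blast
  have s1: "self_equiv G (glue (\<lambda>C. fst (fst (w C))))" by (rule self_equiv_glue) (use W in blast)
  have s2: "self_equiv G (glue (\<lambda>C. snd (fst (w C))))" by (rule self_equiv_glue) (use W in blast)
  have n: "nat_trans G G (glue (\<lambda>C. fst (fst (w C)))) (glue (\<lambda>C. snd (fst (w C)))) (\<lambda>a\<in>Ob. snd (w (homog_class a)) a)"
  proof (rule nat_trans_glue)
    fix C assume C: "C \<in> I"
    show "gfunctor (full_sub G C) (full_sub G C) (fst (fst (w C)))" using W[OF C] unfolding self_equiv_def by (elim conjE)
    show "gfunctor (full_sub G C) (full_sub G C) (snd (fst (w C)))" using W[OF C] unfolding self_equiv_def by (elim conjE)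
    show "nat_trans (full_sub G C) (full_sub G C) (fst (fst (w C))) (snd (fst (w C))) (snd (w C))" using W[OF C] by (elim conjE)
  qed
  show ?thesis unfolding glue_arr_def using s1 s2 n by (simp add: Sym_arr)
qed

end

section \<open>Restriction is an isomorphism of 2-groups\<close>

context plain_grpd
begin

sublocale prod: two_group_family I "\<lambda>C. Sym (full_sub G C)"
  by (rule two_group_family.intro, rule plain_grpd.Sym_two_group, rule plain_grpd.intro, rule component_grpd)

lemma restr_o_eqI:
  assumes "F \<in> gObj S" and "\<Phi> \<in> extensional I" and "\<And>C. C \<in> I \<Longrightarrow> restr_functor G C F = \<Phi> C"
  shows "restr_o G F = \<Phi>"
  using assms by (intro extensionalityI[of _ I]) (auto simp: restr_o_def restr_functor_def)

lemma restr_m_eqI: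
  assumes "u \<in> gArr S" and "w \<in> extensional I" and "\<And>C. C \<in> I \<Longrightarrow> restr_m G u C = w C"
  shows "restr_m G u = w"
  using assms by (intro extensionalityI[of _ I]) (auto simp: restr_m_def)

lemma restr_o_obj: "F \<in> gObj S \<Longrightarrow> restr_o G F \<in> gObj prod.P"
  using homog_component.self_equiv_restr_functor[OF homog_componentI]
  by (auto simp: restr_o_def restr_functor_def PiE_iff)

lemma restr_m_arr_prod: "u \<in> gArr S \<Longrightarrow> restr_m G u \<in> gArr prod.P"
  using homog_component.restr_m_arr[OF homog_componentI] by (auto simp: restr_m_def PiE_iff)

lemma restr_gfunctor: "gfunctor S prod.P (restr_o G, restr_m G)"
  unfolding gfunctor_def fst_conv snd_conv
proof (intro conjI ballI impI)
  show "restr_o G \<in> extensional (gObj S)" "restr_m G \<in> extensional (gArr S)"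
    by (simp_all add: restr_o_def restr_m_def)
next
  fix F assume F: "F \<in> gObj S"
  then show "restr_o G F \<in> gObj prod.P" by (rule restr_o_obj)
  show "restr_m G (gId S F) = gId prod.P (restr_o G F)"
    using F homog_component.restr_m_id[OF homog_componentI] by (intro restr_m_eqI[OF sym.id_ar]) auto
next
  fix u assume u: "u \<in> gArr S"
  have "gDom prod.P (restr_m G u) = restr_o G (gDom S u)" "gCod prod.P (restr_m G u) = restr_o G (gCod S u)"
    using u homog_component.restr_m_dom[OF homog_componentI u] homog_component.restr_m_cod[OF homog_componentI u]
    by (auto intro!: restr_o_eqI[symmetric] simp: Sym_arr restr_m_def)
  then show "restr_m G u \<in> hom prod.P (restr_o G (gDom S u)) (restr_o G (gCod S u))"
    using restr_m_arr_prod[OF u] by (simp add: hom_def)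
next
  fix u v assume "u \<in> gArr S" "v \<in> gArr S" "gCod S u = gDom S v"
  then show "restr_m G (gComp S v u) = gComp prod.P (restr_m G v) (restr_m G u)"
    using homog_component.restr_m_comp[OF homog_componentI] by (intro restr_m_eqI[OF sym.cmp_ar]) auto
qed

lemma restr_strict_monoidal: "strict_monoidal_functor S prod.P (restr_o G, restr_m G)"
  unfolding strict_monoidal_functor_def fst_conv snd_conv
proof (intro conjI ballI restr_gfunctor)
  show "restr_o G (unit_o S) = unit_o prod.P"
    by (rule restr_o_eqI) (simp_all add: homog_component.restr_functor_id[OF homog_componentI])
next
  fix F assume F: "F \<in> gObj S"
  show "restr_m G (lunit_m S F) = lunit_m prod.P (restr_o G F)"
    using F homog_component.restr_m_lunit[OF homog_componentI] by (intro restr_m_eqI[OF sym.lunit_ar]) auto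
  show "restr_m G (runit_m S F) = runit_m prod.P (restr_o G F)"
    using F homog_component.restr_m_runit[OF homog_componentI] by (intro restr_m_eqI[OF sym.runit_ar]) auto
next
  fix u v assume "u \<in> gArr S" "v \<in> gArr S"
  then show "restr_m G (tens_m S u v) = tens_m prod.P (restr_m G u) (restr_m G v)"
    using homog_component.restr_m_tens_m[OF homog_componentI] by (intro restr_m_eqI[OF sym.tens_m_ar]) auto
next
  fix F K assume "F \<in> gObj S" "K \<in> gObj S"
  then show "restr_o G (tens_o S F K) = tens_o prod.P (restr_o G F) (restr_o G K)"
    using homog_component.restr_functor_comp[OF homog_componentI]
    by (intro restr_o_eqI) (auto simp: restr_o_def restr_functor_def)
  fix L assume "L \<in> gObj S"
  then show "restr_m G (assoc_m S F K L) = assoc_m prod.P (restr_o G F) (restr_o G K) (restr_o G L)"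
    using \<open>F \<in> gObj S\<close> \<open>K \<in> gObj S\<close> homog_component.restr_m_assoc[OF homog_componentI]
    by (intro restr_m_eqI[OF sym.assoc_ar]) auto
qed

lemma component_gfunctor_if_obj:
  "\<Phi> \<in> gObj prod.P \<Longrightarrow> C \<in> I \<Longrightarrow> gfunctor (full_sub G C) (full_sub G C) (\<Phi> C)"
  using grpd.self_equiv_functor[OF component_grpd] by (auto simp: PiE_iff)

lemma self_equiv_glue_obj: "\<Phi> \<in> gObj prod.P \<Longrightarrow> glue \<Phi> \<in> gObj S"
  using self_equiv_glue[of \<Phi>] by (auto simp: PiE_iff)

lemma glue_arr_arr_prod: "w \<in> gArr prod.P \<Longrightarrow> glue_arr w \<in> gArr S"
  by (rule glue_arr_arr) (auto simp: PiE_iff)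

lemma glue_restr_o: "F \<in> gObj S \<Longrightarrow> glue (restr_o G F) = F"
  using glue_cong[of "restr_o G F" "\<lambda>C. restr_functor G C F"] glue_restr_functor[of F]
  by (simp add: restr_o_def restr_functor_def)

lemma restr_o_glue: "\<Phi> \<in> gObj prod.P \<Longrightarrow> restr_o G (glue \<Phi>) = \<Phi>"
  using self_equiv_glue_obj restr_functor_glue component_gfunctor_if_obj
  by (intro restr_o_eqI) (auto simp: PiE_iff)

lemma glue_arr_restr_m:
  assumes u: "u \<in> gArr S"
  shows "glue_arr (restr_m G u) = u"
proof -
  obtain F F' \<eta> where u_eq: "u = ((F, F'), \<eta>)" and F: "self_equiv G F" "self_equiv G F'"
    and \<eta>: "nat_trans G G F F' \<eta>"
    using u by (rule Sym_arrE)
  have restr_u: "restr_m G u = (\<lambda>C\<in>I. ((restr_functor G C F, restr_functor G C F'), restrict \<eta> C))"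
    unfolding restr_m_def restr_functor_def using u u_eq by simp
  have "glue (\<lambda>C. fst (fst (restr_m G u C))) = glue (\<lambda>C. restr_functor G C F)"
    and "glue (\<lambda>C. snd (fst (restr_m G u C))) = glue (\<lambda>C. restr_functor G C F')"
    by (rule glue_cong, simp add: restr_u)+
  then have "glue (\<lambda>C. fst (fst (restr_m G u C))) = F" "glue (\<lambda>C. snd (fst (restr_m G u C))) = F'"
    using glue_restr_functor F by simp_all
  moreover have "(\<lambda>a\<in>Ob. snd (restr_m G u (homog_class a)) a) = \<eta>"
    using nat_trans_extensional[OF \<eta>] homog_class_in_components homog_class_self
    by (intro extensionalityI[of _ Ob]) (auto simp: restr_u)
  ultimately show ?thesis
    unfolding glue_arr_def u_eq by simp
qed

lemma component_arr_if_arr: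
  "w \<in> gArr prod.P \<Longrightarrow> C \<in> I \<Longrightarrow>
   gfunctor (full_sub G C) (full_sub G C) (fst (fst (w C))) \<and>
   gfunctor (full_sub G C) (full_sub G C) (snd (fst (w C))) \<and>
   nat_trans (full_sub G C) (full_sub G C) (fst (fst (w C))) (snd (fst (w C))) (snd (w C))"
  using grpd.self_equiv_functor[OF component_grpd] by (auto simp: PiE_iff Sym_arr)

lemma restr_m_glue_arr:
  assumes w: "w \<in> gArr prod.P"
  shows "restr_m G (glue_arr w) = w"
proof (rule restr_m_eqI[OF glue_arr_arr_prod[OF w]])
  show "w \<in> extensional I" using w by (simp add: PiE_iff)
  fix C assume C: "C \<in> I"
  have "restr_functor G C (glue (\<lambda>C. fst (fst (w C)))) = fst (fst (w C))"
    and "restr_functor G C (glue (\<lambda>C. snd (fst (w C)))) = snd (fst (w C))"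
    by (rule restr_functor_glue[OF C], use component_arr_if_arr[OF w] in blast)+
  moreover have "restrict (\<lambda>a\<in>Ob. snd (w (homog_class a)) a) C = snd (w C)"
  proof (rule extensionalityI[of _ C])
    show "snd (w C) \<in> extensional C"
      using grpd.nat_trans_extensional[OF component_grpd[OF C]] component_arr_if_arr[OF w C]
      by (metis homog_component.H_obj homog_componentI[OF C])
    fix a assume "a \<in> C"
    then show "restrict (\<lambda>a\<in>Ob. snd (w (homog_class a)) a) C a = snd (w C) a"
      using homog_components_subset[OF C] homog_class_of_mem[OF C] by auto
  qed (rule restrict_extensional)
  ultimately show "restr_m G (glue_arr w) C = w C"
    unfolding homog_component.restr_m_apply[OF homog_componentI[OF C] glue_arr_arr_prod[OF w]]
    by (simp add: glue_arr_def)
qed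

theorem restr_two_group_iso: "\<exists>R2 R0. two_group_iso S prod.P (restr_o G, restr_m G) R2 R0"
proof -
  define K where "K = (\<lambda>\<Phi>\<in>gObj prod.P. glue \<Phi>, \<lambda>w\<in>gArr prod.P. glue_arr w)"
  have K_fst: "\<Phi> \<in> gObj prod.P \<Longrightarrow> fst K \<Phi> = glue \<Phi>"
    and K_snd: "w \<in> gArr prod.P \<Longrightarrow> snd K w = glue_arr w" for \<Phi> w
    unfolding K_def by simp_all
  have K_ext: "fst K \<in> extensional (gObj prod.P)" "snd K \<in> extensional (gArr prod.P)"
    unfolding K_def by simp_all
  have K_maps: "\<And>\<Phi>. \<Phi> \<in> gObj prod.P \<Longrightarrow> fst K \<Phi> \<in> gObj S"
    "\<And>w. w \<in> gArr prod.P \<Longrightarrow> snd K w \<in> gArr S"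
    using K_fst K_snd self_equiv_glue_obj glue_arr_arr_prod by simp_all
  have inverse: "\<And>F. F \<in> gObj S \<Longrightarrow> fst K (restr_o G F) = F"
    "\<And>u. u \<in> gArr S \<Longrightarrow> snd K (restr_m G u) = u"
    "\<And>\<Phi>. \<Phi> \<in> gObj prod.P \<Longrightarrow> restr_o G (fst K \<Phi>) = \<Phi>"
    "\<And>w. w \<in> gArr prod.P \<Longrightarrow> restr_m G (snd K w) = w"
    using K_fst[OF restr_o_obj] K_snd[OF restr_m_arr_prod] K_fst K_snd
      glue_restr_o glue_arr_restr_m restr_o_glue restr_m_glue_arr by simp_all
  have restr: "strict_monoidal_functor S prod.P (restr_o G, restr_m G)"
    by (rule restr_strict_monoidal)
  have "strict_monoidal_functor prod.P S K"
    using strict_monoidal_functor_inverse[OF Sym_monoidal restr K_ext K_maps] inverse by simp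
  then show ?thesis
    unfolding two_group_iso_def fst_conv snd_conv
    using Sym_two_group prod.prod_two_group inverse
      strict_monoidal_functor_monoidal[OF Sym_monoidal prod.prod_monoidal restr]
      strict_monoidal_functor_monoidal[OF prod.prod_monoidal Sym_monoidal]
    by blast
qed

end

theorem theorem4p10:
  fixes G :: "('o, 'm) gpd"
  assumes "groupoid G"
  shows "\<exists>R2 R0. two_group_iso (Sym G)
            (prod_mgpd (homog_components G) (\<lambda>C. Sym (full_sub G C)))
            (restr_o G, restr_m G) R2 R0"
  using plain_grpd.restr_two_group_iso[OF plain_grpd.intro, OF grpd.intro, OF assms] .

end
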